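(* Let $\{\tilde P_y:y\in T\}$ be a continuous family of smoothing operators of order $\lambda$ on $\tilde U$, and put $P_y=R\circ\tilde P_y\circ E$, $y\in T$. Then $\{P_y:y\in T\}$ is a continuous family of smoothing operators of order $\lambda$ on $U$.
   Context: $U\subset\mathbb R^p$, $U'\subset\mathbb R^k$, $T\subset\mathbb R^q$ open neighborhoods of $0$, $\tilde U=U\times U'\subset\mathbb R^N$. $X_1,\dots,X_d$ smooth vector fields on $U\times T$ of the form $\sum_lX_i^l(x,y)\partial_{x_l}$ (families $\{X_{i,y}\}$ on $U$), and $\tilde X_i=X_i+\sum_{j=1}^ku_{ij}(x,x',y)\partial_{x'_j}$ smooth vector fields on $\tilde U\times T$ which at every point are free of order $m$ (basic commutators of order $\le m$ span a space of dimension $\dim\mathfrak g_{d,m}=N$, $\mathfrak g_{d,m}$ the free nilpotent Lie algebra of step $m$ on $d$ generators) and span $\mathbb R^N$. $dv_y$ is the volume of the Riemannian metric on $\tilde U$ making orthonormal a fixed pointwise basis of such commutators. For $I=(i_1,\dots,i_r)$, $X_{I,y}=X_{i_1,y}\cdots X_{i_r,y}$, $\tilde X_{I,y}$ similarly. $S^2_{k,y}(U)=\{f\in L^2(U):X_{I,y}f\in L^2,|I|\le k\}$ with norm $\sum_{|I|\le k}\|X_{I,y}f\|_{L^2}$; $S^2_{k,y}(\tilde U)$ analogously with $\tilde X_{I,y}$ in $L^2(\tilde U,dv_y)$. A family $\{P_y:C^\infty(\overline V)\to C^\infty(\overline V)\}$ ($V=U$ or $\tilde U$) is a continuous family of smoothing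 operators of order $\lambda\in\mathbb Z_+$ if for every $k\in\mathbb Z_+$ and $y$, $P_y$ extends to a bounded operator $S^2_{k,y}(V)\to S^2_{k+\lambda,y}(V)$ with norms bounded uniformly in $y\in T$. $Ef(x,x')=f(x)$; $Rf(x)=\int_{U'}f(x,x')\zeta(x')dx'$ for a fixed $\zeta\in C^\infty_c(U')$ with $\int\zeta=1$. *)

theory Defs
  imports "HOL-Analysis.Analysis"
begin

fun dderiv :: "'a list \<Rightarrow> ('a::real_normed_vector \<Rightarrow> 'b::real_normed_vector) \<Rightarrow> 'a \<Rightarrow> 'b" where
  "dderiv [] f = f"
| "dderiv (v # vs) f = (\<lambda>z. frechet_derivative (dderiv vs f) (at z) v)"

definition smooth_on :: "'a::real_normed_vector set \<Rightarrow> ('a \<Rightarrow> 'b::real_normed_vector) \<Rightarrow> bool" where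
  "smooth_on S f \<longleftrightarrow> open S \<and> (\<forall>vs. dderiv vs f differentiable_on S)"

text \<open>C-infinity(closure V): functions agreeing on the closure of V with a smooth function
  defined on an open neighbourhood of the closure.\<close>
definition smooth_cl :: "'a::real_normed_vector set \<Rightarrow> ('a \<Rightarrow> real) \<Rightarrow> bool" where
  "smooth_cl V f \<longleftrightarrow> (\<exists>W g. open W \<and> closure V \<subseteq> W \<and> smooth_on W g \<and> (\<forall>z\<in>closure V. f z = g z))"

definition vf_apply :: "('a::real_normed_vector \<Rightarrow> 'a) \<Rightarrow> ('a \<Rightarrow> real) \<Rightarrow> 'a \<Rightarrow> real" where
  "vf_apply Y f z = frechet_derivative f (at z) (Y z)"

text \<open>Lie bracket [X,Y], so that [X,Y]f = X(Yf) - Y(Xf).\<close>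
definition lie_br :: "('a::real_normed_vector \<Rightarrow> 'a) \<Rightarrow> ('a \<Rightarrow> 'a) \<Rightarrow> 'a \<Rightarrow> 'a" where
  "lie_br X Y z = frechet_derivative Y (at z) (X z) - frechet_derivative X (at z) (Y z)"

fun op_I :: "(nat \<Rightarrow> 'a::real_normed_vector \<Rightarrow> 'a) \<Rightarrow> nat list \<Rightarrow> ('a \<Rightarrow> real) \<Rightarrow> 'a \<Rightarrow> real" where
  "op_I Y [] f = f"
| "op_I Y (i # I) f = vf_apply (Y i) (op_I Y I f)"

definition mindices :: "nat \<Rightarrow> nat \<Rightarrow> nat list set" where
  "mindices d k = {I. set I \<subseteq> {..<d} \<and> length I \<le> k}"

datatype brk = Gen nat | Br brk brk

fun brk_order :: "brk \<Rightarrow> nat" where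
  "brk_order (Gen i) = 1"
| "brk_order (Br a b) = brk_order a + brk_order b"

fun brk_gens :: "brk \<Rightarrow> nat set" where
  "brk_gens (Gen i) = {i}"
| "brk_gens (Br a b) = brk_gens a \<union> brk_gens b"

definition brk_ok :: "nat \<Rightarrow> nat \<Rightarrow> brk \<Rightarrow> bool" where
  "brk_ok d m b \<longleftrightarrow> brk_order b \<le> m \<and> brk_gens b \<subseteq> {..<d}"

fun brk_eval :: "(nat \<Rightarrow> 'a::real_normed_vector \<Rightarrow> 'a) \<Rightarrow> brk \<Rightarrow> 'a \<Rightarrow> 'a" where
  "brk_eval Y (Gen i) = Y i"
| "brk_eval Y (Br a b) = lie_br (brk_eval Y a) (brk_eval Y b)"

text \<open>The free associative algebra on generators 0,1,2,... over the reals, as functions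
  from words to coefficients; g_{d,m} is realised as the span of all brackets of
  order at most m in the generators 0..d-1 (free Lie algebra inside the tensor algebra,
  truncated at degree m).\<close>
definition nc_mult :: "(nat list \<Rightarrow> real) \<Rightarrow> (nat list \<Rightarrow> real) \<Rightarrow> nat list \<Rightarrow> real" where
  "nc_mult p q w = (\<Sum>i\<le>length w. p (take i w) * q (drop i w))"

fun brk_poly :: "brk \<Rightarrow> nat list \<Rightarrow> real" where
  "brk_poly (Gen i) = (\<lambda>w. if w = [i] then 1 else 0)"
| "brk_poly (Br a b) = (\<lambda>w. nc_mult (brk_poly a) (brk_poly b) w - nc_mult (brk_poly b) (brk_poly a) w)"

definition nc_indep :: "(nat list \<Rightarrow> real) set \<Rightarrow> bool" where
  "nc_indep S \<longleftrightarrow> (\<forall>c. (\<forall>w. (\<Sum>s\<in>S. c s * s w) = 0) \<longrightarrow> (\<forall>s\<in>S. c s = 0))"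

definition free_nilp_dim :: "nat \<Rightarrow> nat \<Rightarrow> nat" where
  "free_nilp_dim d m = (GREATEST n. \<exists>S. S \<subseteq> brk_poly ` {b. brk_ok d m b} \<and> finite S \<and> card S = n \<and> nc_indep S)"

text \<open>Weighted L2 Sobolev space S^2_k on V w.r.t. vector fields Y (indices < d) and the
  measure w(z) dz (Lebesgue measure with density w).\<close>
definition sob_in :: "nat \<Rightarrow> (nat \<Rightarrow> 'a::euclidean_space \<Rightarrow> 'a) \<Rightarrow> ('a \<Rightarrow> real) \<Rightarrow> 'a set \<Rightarrow> nat \<Rightarrow> ('a \<Rightarrow> real) \<Rightarrow> bool" where
  "sob_in d Y w V k f \<longleftrightarrow> (\<forall>I\<in>mindices d k. set_integrable lborel V (\<lambda>z. (op_I Y I f z)\<^sup>2 * w z))"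

definition sob_norm :: "nat \<Rightarrow> (nat \<Rightarrow> 'a::euclidean_space \<Rightarrow> 'a) \<Rightarrow> ('a \<Rightarrow> real) \<Rightarrow> 'a set \<Rightarrow> nat \<Rightarrow> ('a \<Rightarrow> real) \<Rightarrow> real" where
  "sob_norm d Y w V k f = (\<Sum>I\<in>mindices d k. sqrt (LINT z:V|lborel. (op_I Y I f z)\<^sup>2 * w z))"

definition smoothing_family ::
  "nat \<Rightarrow> ('y \<Rightarrow> nat \<Rightarrow> 'a::euclidean_space \<Rightarrow> 'a) \<Rightarrow> ('y \<Rightarrow> 'a \<Rightarrow> real) \<Rightarrow> 'a set \<Rightarrow> 'y set \<Rightarrow> nat
    \<Rightarrow> ('y \<Rightarrow> ('a \<Rightarrow> real) \<Rightarrow> ('a \<Rightarrow> real)) \<Rightarrow> bool" where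
  "smoothing_family d Y w V T lam P \<longleftrightarrow>
     (\<forall>y\<in>T. \<forall>f. smooth_cl V f \<longrightarrow> smooth_cl V (P y f)) \<and>
     (\<forall>y\<in>T. \<forall>f g a b. smooth_cl V f \<longrightarrow> smooth_cl V g \<longrightarrow>
        (\<forall>z\<in>closure V. P y (\<lambda>v. a * f v + b * g v) z = a * P y f z + b * P y g z)) \<and>
     (\<forall>k. \<exists>C. \<forall>y\<in>T. \<forall>f. smooth_cl V f \<and> sob_in d (Y y) (w y) V k f \<longrightarrow>
        sob_in d (Y y) (w y) V (k + lam) (P y f) \<and>
        sob_norm d (Y y) (w y) V (k + lam) (P y f) \<le> C * sob_norm d (Y y) (w y) V k f)"

definition pjoin :: "real^'p::finite \<Rightarrow> real^'k::finite \<Rightarrow> real^('p + 'k)" where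
  "pjoin x x' = (\<chi> i. case i of Inl a \<Rightarrow> x $ a | Inr b \<Rightarrow> x' $ b)"

definition pfst :: "real^('p::finite + 'k::finite) \<Rightarrow> real^'p" where
  "pfst z = (\<chi> a. z $ Inl a)"

definition psnd :: "real^('p::finite + 'k::finite) \<Rightarrow> real^'k" where
  "psnd z = (\<chi> b. z $ Inr b)"

definition Ut :: "(real^'p::finite) set \<Rightarrow> (real^'k::finite) set \<Rightarrow> (real^('p + 'k)) set" where
  "Ut U U' = {z. pfst z \<in> U \<and> psnd z \<in> U'}"

text \<open>Lifted fields  X~_i = X_i + sum_j u_ij d/dx'_j.\<close>
definition lift_vf :: "(nat \<Rightarrow> 'y \<Rightarrow> real^'p::finite \<Rightarrow> real^'p) \<Rightarrow> (nat \<Rightarrow> 'y \<Rightarrow> real^('p + 'k) \<Rightarrow> real^'k::finite)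
    \<Rightarrow> 'y \<Rightarrow> nat \<Rightarrow> real^('p + 'k) \<Rightarrow> real^('p + 'k)" where
  "lift_vf X u y i z = pjoin (X i y (pfst z)) (u i y z)"

text \<open>Matrix whose columns are the chosen commutators B a at z; the Riemannian volume
  making them orthonormal has density 1/|det| w.r.t. Lebesgue measure.\<close>
definition comm_mat :: "(nat \<Rightarrow> real^'n::finite \<Rightarrow> real^'n) \<Rightarrow> ('n \<Rightarrow> brk) \<Rightarrow> real^'n \<Rightarrow> real^'n^'n" where
  "comm_mat Y B z = (\<chi> i a. brk_eval Y (B a) z $ i)"

definition vol_density :: "(nat \<Rightarrow> real^'n::finite \<Rightarrow> real^'n) \<Rightarrow> ('n \<Rightarrow> brk) \<Rightarrow> real^'n \<Rightarrow> real" where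
  "vol_density Y B z = 1 / \<bar>det (comm_mat Y B z)\<bar>"

definition Eop :: "(real^'p::finite \<Rightarrow> real) \<Rightarrow> real^('p + 'k::finite) \<Rightarrow> real" where
  "Eop f z = f (pfst z)"

definition Rop :: "(real^'k::finite) set \<Rightarrow> (real^'k \<Rightarrow> real) \<Rightarrow> (real^('p::finite + 'k) \<Rightarrow> real) \<Rightarrow> real^'p \<Rightarrow> real" where
  "Rop U' \<zeta> f x = (LINT x':U'|lborel. f (pjoin x x') * \<zeta> x')"

end

theory Submission
  imports Defs
begin

(* E and R are bounded between the spaces S^2_k(U) and S^2_k(U x U'), uniformly in the
   parameter, so R o P~_y o E inherits the smoothing estimates of P~_y.  For E this holds because
   X~_I (E f) = E (X_I f) and the volume density is bounded on the compact closure.  For R, write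
   R h x = integral of h(x, x') zeta(x') dx'.  Differentiating along X_i under the integral sign
   differentiates h along the horizontal part of X~_i; the vertical part sum_j u_ij d/dx'_j is
   moved onto the cut-off by integration by parts along the fibre, so X_i R h = R (X~_i h) + R' h,
   where R' integrates against a new weight with the same compact support in x'.  Iterating,
   X_I R h is a finite sum of such fibre integrals of X~_J h with |J| <= |I|, and each of them is
   bounded in L^2 by the Cauchy-Schwarz inequality along the fibres. *)

lemma frechet_derivative_cong_open:
  assumes "open S" "x \<in> S" "\<And>x. x \<in> S \<Longrightarrow> f x = g x"
  shows "frechet_derivative f (at x) = frechet_derivative g (at x)"
proof -
  have "(\<lambda>D. (f has_derivative D) (at x)) = (\<lambda>D. (g has_derivative D) (at x))"
    using has_derivative_transform_within_open[OF _ assms(1,2)] assms(3) by metis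
  thus ?thesis unfolding frechet_derivative_def by simp
qed

lemma dderiv_cong_open:
  assumes "open S" "\<And>z. z \<in> S \<Longrightarrow> f z = g z" "z \<in> S"
  shows "dderiv vs f z = dderiv vs g z"
  using assms(3)
proof (induction vs arbitrary: z)
  case Nil thus ?case using assms by simp
next
  case (Cons v vs)
  have "frechet_derivative (dderiv vs f) (at z) = frechet_derivative (dderiv vs g) (at z)"
    by (rule frechet_derivative_cong_open[OF assms(1) Cons.prems]) (use Cons.IH in auto)
  thus ?case by simp
qed

lemma dderiv_zero_open:
  assumes "open S" "\<And>z. z \<in> S \<Longrightarrow> f z = 0" "z \<in> S"
  shows "dderiv vs f z = 0"
proof -
  have "dderiv vs (\<lambda>z. 0::'b) = (\<lambda>z. 0)" for vs :: "'a list"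
    by (induction vs) auto
  thus ?thesis using dderiv_cong_open[OF assms(1), of f "\<lambda>_. 0", OF assms(2,3)] by simp
qed

lemma dderiv_append: "dderiv (vs @ ws) f = dderiv vs (dderiv ws f)"
  by (induction vs) auto

lemma smooth_on_dderiv: "smooth_on S f \<Longrightarrow> smooth_on S (dderiv vs f)"
  unfolding smooth_on_def by (metis dderiv_append)

lemma smooth_on_open: "smooth_on S f \<Longrightarrow> open S"
  unfolding smooth_on_def by auto

lemma smooth_on_has_derivative:
  assumes "smooth_on S f" "z \<in> S"
  shows "(dderiv vs f has_derivative (\<lambda>v. dderiv (v # vs) f z)) (at z)"
proof -
  have "dderiv vs f differentiable at z"
    using assms unfolding smooth_on_def by (metis differentiable_on_eq_differentiable_at)
  thus ?thesis using frechet_derivative_works by auto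
qed

lemma linear_dderiv_Cons:
  "smooth_on S f \<Longrightarrow> z \<in> S \<Longrightarrow> linear (\<lambda>v. dderiv (v # vs) f z)"
  using smooth_on_has_derivative has_derivative_linear by blast

lemma smooth_on_continuous: "smooth_on S f \<Longrightarrow> continuous_on S (dderiv vs f)"
  unfolding smooth_on_def using differentiable_imp_continuous_on by blast

lemma smooth_on_subset: "smooth_on S f \<Longrightarrow> open S' \<Longrightarrow> S' \<subseteq> S \<Longrightarrow> smooth_on S' f"
  unfolding smooth_on_def using differentiable_on_subset by blast

lemma smooth_on_Un:
  assumes "smooth_on S f" "smooth_on S' f"
  shows "smooth_on (S \<union> S') f"
proof -
  have o: "open S" "open S'" using assms smooth_on_open by auto
  show ?thesis using assms unfolding smooth_on_def
    by (auto simp: differentiable_on_eq_differentiable_at[OF open_Un[OF o]]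
        differentiable_on_eq_differentiable_at[OF o(1)] differentiable_on_eq_differentiable_at[OF o(2)])
qed

lemma smooth_on_cong:
  assumes "smooth_on S f" "\<And>z. z \<in> S \<Longrightarrow> f z = g z"
  shows "smooth_on S g"
proof -
  have o: "open S" using assms smooth_on_open by blast
  show ?thesis unfolding smooth_on_def
  proof (intro conjI allI o)
    fix vs
    have "dderiv vs f differentiable_on S" using assms unfolding smooth_on_def by auto
    moreover have "\<And>z. z \<in> S \<Longrightarrow> dderiv vs f z = dderiv vs g z"
      by (rule dderiv_cong_open[OF o assms(2)])
    ultimately show "dderiv vs g differentiable_on S"
      unfolding differentiable_on_eq_differentiable_at[OF o] differentiable_def
      using has_derivative_transform_within_open[OF _ o] by blast
  qed
qed

lemma smooth_on_common_nbhd: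
  assumes "finite I" "\<And>i. i \<in> I \<Longrightarrow> \<exists>W. K \<subseteq> W \<and> smooth_on W (f i)"
  obtains W where "open W" "K \<subseteq> W" "\<And>i. i \<in> I \<Longrightarrow> smooth_on W (f i)"
proof -
  obtain W where W: "\<And>i. i \<in> I \<Longrightarrow> K \<subseteq> W i \<and> smooth_on (W i) (f i)"
    using assms(2) by metis
  have o: "open (\<Inter>(W ` I))" using W smooth_on_open assms(1) by (intro open_INT) auto
  show ?thesis
  proof (rule that[OF o])
    show "K \<subseteq> \<Inter>(W ` I)" using W by auto
    fix i assume "i \<in> I"
    thus "smooth_on (\<Inter>(W ` I)) (f i)" using W smooth_on_subset[OF _ o] by blast
  qed
qed

lemma smooth_on_dderiv_formula:
  assumes o: "open S"
    and F0: "\<And>z. z \<in> S \<Longrightarrow> f z = F [] z"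
    and D: "\<And>vs z. z \<in> S \<Longrightarrow> (F vs has_derivative (\<lambda>v. F (v # vs) z)) (at z)"
  shows "smooth_on S f" "\<And>vs z. z \<in> S \<Longrightarrow> dderiv vs f z = F vs z"
proof -
  show F: "dderiv vs f z = F vs z" if "z \<in> S" for vs z
    using that
  proof (induction vs arbitrary: z)
    case Nil thus ?case using F0 by simp
  next
    case (Cons v vs)
    have "frechet_derivative (dderiv vs f) (at z) = frechet_derivative (F vs) (at z)"
      by (rule frechet_derivative_cong_open[OF o Cons.prems]) (use Cons.IH in auto)
    also have "\<dots> = (\<lambda>v. F (v # vs) z)"
      using D[OF Cons.prems] frechet_derivative_at by metis
    finally show ?case by simp
  qed
  show "smooth_on S f" unfolding smooth_on_def
  proof (intro conjI allI o)
    fix vs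
    show "dderiv vs f differentiable_on S"
      unfolding differentiable_on_eq_differentiable_at[OF o]
    proof
      fix z assume z: "z \<in> S"
      have "(dderiv vs f has_derivative (\<lambda>v. F (v # vs) z)) (at z)"
        by (rule has_derivative_transform_within_open[OF D[OF z] o z]) (use F in auto)
      thus "dderiv vs f differentiable at z" unfolding differentiable_def by blast
    qed
  qed
qed

lemma smooth_on_const: "open S \<Longrightarrow> smooth_on S (\<lambda>z. c)"
  by (rule smooth_on_dderiv_formula(1)[where F="\<lambda>vs z. if vs = [] then c else 0"])
    (auto simp: has_derivative_const)

lemma smooth_on_add:
  assumes f: "smooth_on S f" and g: "smooth_on S g"
  shows "smooth_on S (\<lambda>z. f z + g z)"
proof (rule smooth_on_dderiv_formula(1)[where F="\<lambda>vs z. dderiv vs f z + dderiv vs g z"])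
  fix vs z assume z: "z \<in> S"
  show "((\<lambda>z. dderiv vs f z + dderiv vs g z) has_derivative
     (\<lambda>v. dderiv (v # vs) f z + dderiv (v # vs) g z)) (at z)"
    by (rule has_derivative_add[OF smooth_on_has_derivative[OF f z] smooth_on_has_derivative[OF g z]])
qed (use smooth_on_open[OF f] in auto)

lemma smooth_on_sum:
  assumes "finite A" "open S" "\<And>i. i \<in> A \<Longrightarrow> smooth_on S (f i)"
  shows "smooth_on S (\<lambda>z. \<Sum>i\<in>A. f i z)"
  using assms by (induction A rule: finite_induct) (auto intro: smooth_on_const smooth_on_add)

lemma smooth_on_bounded_linear_comp:
  assumes f: "smooth_on S f" and L: "bounded_linear L"
  shows "smooth_on S (\<lambda>z. L (f z))" "\<And>vs z. z \<in> S \<Longrightarrow> dderiv vs (\<lambda>z. L (f z)) z = L (dderiv vs f z)"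
proof -
  have D: "((\<lambda>z. L (dderiv vs f z)) has_derivative (\<lambda>v. L (dderiv (v # vs) f z))) (at z)"
    if "z \<in> S" for vs z
    using bounded_linear.has_derivative[OF L smooth_on_has_derivative[OF f that]] by simp
  note F = smooth_on_dderiv_formula[where F="\<lambda>vs z. L (dderiv vs f z)", OF smooth_on_open[OF f] _ D]
  show "smooth_on S (\<lambda>z. L (f z))" "\<And>vs z. z \<in> S \<Longrightarrow> dderiv vs (\<lambda>z. L (f z)) z = L (dderiv vs f z)"
    using F by auto
qed

lemma smooth_on_diff:
  assumes "smooth_on S (f :: 'a::real_normed_vector \<Rightarrow> 'b::real_normed_vector)" "smooth_on S g"
  shows "smooth_on S (\<lambda>z. f z - g z)"
  using smooth_on_add[OF assms(1) smooth_on_bounded_linear_comp(1)[OF assms(2) bounded_linear_minus[OF bounded_linear_ident]]]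
  by simp

lemma smooth_on_scaleR_const: "smooth_on S f \<Longrightarrow> smooth_on S (\<lambda>z. f z *\<^sub>R b)"
  using smooth_on_bounded_linear_comp(1)[OF _ bounded_linear_scaleR_left] by blast

lemma smooth_on_inner_const: "smooth_on S f \<Longrightarrow> smooth_on S (\<lambda>z. f z \<bullet> b)"
  using smooth_on_bounded_linear_comp(1)[OF _ bounded_linear_inner_left] by blast

lemma smooth_on_comp_affine:
  fixes L :: "'a::real_normed_vector \<Rightarrow> 'c::real_normed_vector" and c :: 'c
  assumes f: "smooth_on S f" and L: "bounded_linear L"
  defines "S' \<equiv> {z. L z + c \<in> S}"
  shows "smooth_on S' (\<lambda>z. f (L z + c))"
    "\<And>vs z. z \<in> S' \<Longrightarrow> dderiv vs (\<lambda>z. f (L z + c)) z = dderiv (map L vs) f (L z + c)"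
proof -
  have "continuous_on UNIV (\<lambda>z. L z + c)"
    by (intro continuous_intros linear_continuous_on L)
  hence o: "open S'" unfolding S'_def using open_vimage[of S "\<lambda>z. L z + c"] smooth_on_open[OF f]
    by (simp add: vimage_def)
  have D: "((\<lambda>z. dderiv (map L vs) f (L z + c)) has_derivative (\<lambda>v. dderiv (map L (v # vs)) f (L z + c))) (at z)"
    if "z \<in> S'" for vs z
  proof -
    have "((\<lambda>z. L z + c) has_derivative L) (at z)"
      using bounded_linear.has_derivative[OF L has_derivative_ident] by (auto intro!: derivative_eq_intros)
    moreover have "(dderiv (map L vs) f has_derivative (\<lambda>v. dderiv (v # map L vs) f (L z + c))) (at (L z + c))"
      using smooth_on_has_derivative[OF f] that unfolding S'_def by blast
    ultimately show ?thesis using diff_chain_at[of "\<lambda>z. L z + c" L z] by (simp add: o_def)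
  qed
  note F = smooth_on_dderiv_formula[where F="\<lambda>vs z. dderiv (map L vs) f (L z + c)", OF o _ D]
  show "smooth_on S' (\<lambda>z. f (L z + c))"
    "\<And>vs z. z \<in> S' \<Longrightarrow> dderiv vs (\<lambda>z. f (L z + c)) z = dderiv (map L vs) f (L z + c)"
    using F by auto
qed

lemma smooth_on_comp_linear:
  fixes L :: "'a::real_normed_vector \<Rightarrow> 'c::real_normed_vector"
  assumes f: "smooth_on S f" and L: "bounded_linear L" and S': "open S'" "\<And>z. z \<in> S' \<Longrightarrow> L z \<in> S"
  shows "smooth_on S' (\<lambda>z. f (L z))"
  using smooth_on_subset[OF smooth_on_comp_affine(1)[OF f L, where c=0] S'(1)] S'(2) by auto

lemma dderiv_comp_linear:
  fixes L :: "'a::real_normed_vector \<Rightarrow> 'c::real_normed_vector"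
  assumes f: "smooth_on S f" and L: "bounded_linear L" and z: "L z \<in> S"
  shows "dderiv vs (\<lambda>z. f (L z)) z = dderiv (map L vs) f (L z)"
  using smooth_on_comp_affine(2)[OF f L, where c=0, of z vs] z by auto

fun leibniz_splits :: "'a list \<Rightarrow> ('a list \<times> 'a list) list" where
  "leibniz_splits [] = [([], [])]"
| "leibniz_splits (v # vs) =
     map (\<lambda>(a, b). (v # a, b)) (leibniz_splits vs) @ map (\<lambda>(a, b). (a, v # b)) (leibniz_splits vs)"

lemma has_derivative_sum_list:
  assumes "\<And>x. x \<in> set xs \<Longrightarrow> (F x has_derivative F' x) net"
  shows "((\<lambda>z. \<Sum>x\<leftarrow>xs. F x z) has_derivative (\<lambda>v. \<Sum>x\<leftarrow>xs. F' x v)) net"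
  using assms by (induction xs) (auto intro!: derivative_eq_intros)

lemma sum_list_concat_pairs:
  "(\<Sum>p\<leftarrow>concat (map (\<lambda>q. [f q, g q]) xs). F p) = (\<Sum>q\<leftarrow>xs. F (f q) + F (g q))"
  by (induction xs) (auto simp: add.assoc)

lemma continuous_on_sum_list:
  fixes f :: "'i \<Rightarrow> 'a::topological_space \<Rightarrow> 'b::topological_monoid_add"
  shows "(\<And>q. q \<in> set xs \<Longrightarrow> continuous_on S (f q)) \<Longrightarrow> continuous_on S (\<lambda>x. \<Sum>q\<leftarrow>xs. f q x)"
proof (induction xs)
  case (Cons a xs)
  have "continuous_on S (f a)" "continuous_on S (\<lambda>x. \<Sum>q\<leftarrow>xs. f q x)" using Cons by auto
  from continuous_on_add[OF this] show ?case by simp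
qed simp

lemma smooth_on_mult:
  fixes f g :: "'a::real_normed_vector \<Rightarrow> real"
  assumes f: "smooth_on S f" and g: "smooth_on S g"
  shows "smooth_on S (\<lambda>z. f z * g z)"
    "\<And>vs z. z \<in> S \<Longrightarrow> dderiv vs (\<lambda>z. f z * g z) z
       = (\<Sum>(a, b)\<leftarrow>leibniz_splits vs. dderiv a f z * dderiv b g z)"
proof -
  define F where "F vs z = (\<Sum>ab\<leftarrow>leibniz_splits vs. dderiv (fst ab) f z * dderiv (snd ab) g z)" for vs z
  have D: "(F vs has_derivative (\<lambda>v. F (v # vs) z)) (at z)" if z: "z \<in> S" for vs z
  proof -
    have "(F vs has_derivative
       (\<lambda>v. \<Sum>ab\<leftarrow>leibniz_splits vs. dderiv (v # fst ab) f z * dderiv (snd ab) g z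
              + dderiv (fst ab) f z * dderiv (v # snd ab) g z)) (at z)"
      unfolding F_def[abs_def] by (rule has_derivative_sum_list)
        (auto intro!: derivative_eq_intros smooth_on_has_derivative[OF f z] smooth_on_has_derivative[OF g z])
    thus ?thesis by (simp add: F_def case_prod_beta o_def sum_list_addf)
  qed
  note R = smooth_on_dderiv_formula[where F=F, OF smooth_on_open[OF f] _ D]
  show "smooth_on S (\<lambda>z. f z * g z)" using R(1) by (simp add: F_def)
  show "\<And>vs z. z \<in> S \<Longrightarrow> dderiv vs (\<lambda>z. f z * g z) z
       = (\<Sum>(a, b)\<leftarrow>leibniz_splits vs. dderiv a f z * dderiv b g z)"
    using R(2) by (simp add: F_def split_def)
qed

lemma dderiv_mult_single:
  fixes f g :: "'a::real_normed_vector \<Rightarrow> real"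
  assumes "smooth_on S f" "smooth_on S g" "z \<in> S"
  shows "dderiv [w] (\<lambda>z. f z * g z) z = dderiv [w] f z * g z + f z * dderiv [w] g z"
  using smooth_on_mult(2)[OF assms(1,2) assms(3), of "[w]"] by simp

lemma vf_apply_eq_dderiv: "vf_apply V f z = dderiv [V z] f z"
  by (simp add: vf_apply_def)

lemma vf_apply_sum_list:
  assumes "\<And>q. q \<in> set xs \<Longrightarrow> G q differentiable at z"
  shows "vf_apply V (\<lambda>z. \<Sum>q\<leftarrow>xs. G q z) z = (\<Sum>q\<leftarrow>xs. vf_apply V (G q) z)"
proof -
  have "((\<lambda>z. \<Sum>q\<leftarrow>xs. G q z) has_derivative (\<lambda>v. \<Sum>q\<leftarrow>xs. frechet_derivative (G q) (at z) v)) (at z)"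
    by (rule has_derivative_sum_list) (use assms frechet_derivative_works in blast)
  thus ?thesis unfolding vf_apply_def using frechet_derivative_at by metis
qed

lemma vf_apply_eq_sum_Basis:
  fixes f :: "'a::euclidean_space \<Rightarrow> real"
  assumes f: "smooth_on S f" and z: "z \<in> S"
  shows "vf_apply V f z = (\<Sum>b\<in>Basis. (V z \<bullet> b) * dderiv [b] f z)"
proof -
  have lin: "linear (frechet_derivative f (at z))" using linear_dderiv_Cons[OF f z, of "[]"] by simp
  have "vf_apply V f z = dderiv [V z] f z" by (rule vf_apply_eq_dderiv)
  also have "\<dots> = dderiv [\<Sum>b\<in>Basis. (V z \<bullet> b) *\<^sub>R b] f z" by (simp add: euclidean_representation)
  also have "\<dots> = (\<Sum>b\<in>Basis. (V z \<bullet> b) * dderiv [b] f z)"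
    by (simp add: linear_sum[OF lin] linear_scale[OF lin])
  finally show ?thesis .
qed

lemma smooth_on_vf_apply:
  fixes f :: "'a::euclidean_space \<Rightarrow> real"
  assumes f: "smooth_on S f" and V: "smooth_on S V"
  shows "smooth_on S (vf_apply V f)"
proof -
  have "smooth_on S (\<lambda>z. \<Sum>b\<in>Basis. (V z \<bullet> b) * dderiv [b] f z)"
    by (rule smooth_on_sum[OF _ smooth_on_open[OF f]])
      (auto intro!: smooth_on_mult smooth_on_inner_const V smooth_on_dderiv[of S f "[b]" for b, simplified] f)
  thus ?thesis by (rule smooth_on_cong) (use vf_apply_eq_sum_Basis[OF f] in auto)
qed

lemma smooth_on_op_I:
  fixes h :: "'a::euclidean_space \<Rightarrow> real"
  assumes "\<And>i. i \<in> set J \<Longrightarrow> smooth_on S (Y i)" "smooth_on S h"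
  shows "smooth_on S (op_I Y J h)"
  using assms by (induction J) (auto intro!: smooth_on_vf_apply)

lemma op_I_cong_open:
  assumes "open S" "\<And>z. z \<in> S \<Longrightarrow> f z = g z" "z \<in> S"
  shows "op_I Y J f z = op_I Y J g z"
  using assms(3)
proof (induction J arbitrary: z)
  case Nil thus ?case using assms(2) by simp
next
  case (Cons i J)
  have "frechet_derivative (op_I Y J f) (at z) = frechet_derivative (op_I Y J g) (at z)"
    by (rule frechet_derivative_cong_open[OF assms(1) Cons.prems]) (use Cons.IH in auto)
  thus ?case by (simp add: vf_apply_def)
qed

section \<open>Integrals depending smoothly on a parameter\<close>

lemma lborel_integral_eq_integral_cbox:
  fixes g :: "'b::euclidean_space \<Rightarrow> real"
  assumes "continuous_on UNIV g" "\<And>t. t \<notin> cbox a b \<Longrightarrow> g t = 0"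
  shows "integrable lborel g" "(LINT t|lborel. g t) = integral (cbox a b) g"
proof -
  have eq: "g = (\<lambda>t. indicator (cbox a b) t *\<^sub>R g t)"
  proof
    fix t show "g t = indicator (cbox a b) t *\<^sub>R g t" using assms(2)[of t] by (cases "t \<in> cbox a b") auto
  qed
  have "integrable lborel (\<lambda>t. indicator (cbox a b) t *\<^sub>R g t)"
    by (rule borel_integrable_compact) (auto intro: continuous_on_subset[OF assms(1)])
  thus ig: "integrable lborel g" using eq by metis
  have "(LINT t|lborel. g t) = integral UNIV g" using integral_lborel[OF ig] by simp
  also have "\<dots> = integral (cbox a b) g"
  proof -
    have "(\<lambda>t. indicator (cbox a b) t *\<^sub>R g t) = (\<lambda>t. if t \<in> cbox a b then g t else 0)" by auto
    hence "integral UNIV g = integral UNIV (\<lambda>t. if t \<in> cbox a b then g t else 0)" using eq by metis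
    thus ?thesis by (simp add: integral_restrict_UNIV)
  qed
  finally show "(LINT t|lborel. g t) = integral (cbox a b) g" .
qed

lemma bounded_linear_Pair_zero: "bounded_linear (\<lambda>x::'a::real_normed_vector. (x, 0::'b::real_normed_vector))"
  by (rule bounded_linear_Pair) (auto intro: bounded_linear_ident bounded_linear_zero)

lemma smooth_on_slice:
  fixes \<Psi> :: "'a::real_normed_vector \<times> 'b::real_normed_vector \<Rightarrow> 'c::real_normed_vector"
  assumes "smooth_on Q \<Psi>"
  shows "smooth_on {z. (z, y) \<in> Q} (\<lambda>z. \<Psi> (z, y))"
    "(z, y) \<in> Q \<Longrightarrow> dderiv vs (\<lambda>z. \<Psi> (z, y)) z = dderiv (map (\<lambda>v. (v, 0)) vs) \<Psi> (z, y)"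
  using smooth_on_comp_affine[OF assms bounded_linear_Pair_zero, where c="(0, y)"] by auto

lemma open_slice:
  assumes "open Q"
  shows "open {z. (z, y) \<in> Q}"
proof -
  have "continuous_on UNIV (\<lambda>z. (z, y))" by (intro continuous_intros)
  from open_vimage[OF assms this] show ?thesis by (simp add: vimage_def)
qed

lemma has_derivative_partial:
  fixes \<Psi> :: "'a::real_normed_vector \<times> 'b::real_normed_vector \<Rightarrow> 'c::real_normed_vector"
  assumes "smooth_on (A \<times> UNIV) \<Psi>" "x \<in> A"
  shows "((\<lambda>x. \<Psi> (x, t)) has_derivative (\<lambda>v. dderiv [(v, 0)] \<Psi> (x, t))) (at x)"
proof -
  have "smooth_on {x. (x, t) \<in> A \<times> UNIV} (\<lambda>x. \<Psi> (x, t))" by (rule smooth_on_slice(1)[OF assms(1)])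
  from smooth_on_has_derivative[OF this, where vs="[]"] assms(2)
  show ?thesis using smooth_on_slice(2)[OF assms(1), where vs="[v]" for v] by simp
qed

lemma continuous_on_partial_blinfun:
  fixes \<Psi> :: "'a::euclidean_space \<times> 'b::real_normed_vector \<Rightarrow> real"
  assumes s: "smooth_on (A \<times> UNIV) \<Psi>" and S: "S \<subseteq> A \<times> UNIV"
  shows "continuous_on S (\<lambda>(x, t). Blinfun (\<lambda>v. dderiv [(v, 0)] \<Psi> (x, t)))"
proof (rule continuous_on_blinfun_componentwise)
  fix i :: 'a
  have "bounded_linear (\<lambda>v. dderiv [(v, 0)] \<Psi> p)" if "p \<in> A \<times> UNIV" for p
    using has_derivative_partial[OF s, of "fst p" "snd p"] that has_derivative_bounded_linear by auto
  hence "blinfun_apply ((\<lambda>(x, t). Blinfun (\<lambda>v. dderiv [(v, 0)] \<Psi> (x, t))) p) i = dderiv [(i, 0)] \<Psi> p"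
    if "p \<in> S" for p
    using that S by (auto simp: bounded_linear_Blinfun_apply)
  moreover have "continuous_on S (dderiv [(i, 0)] \<Psi>)"
    by (rule continuous_on_subset[OF smooth_on_continuous[OF s] S])
  ultimately show "continuous_on S (\<lambda>p. blinfun_apply ((\<lambda>(x, t). Blinfun (\<lambda>v. dderiv [(v, 0)] \<Psi> (x, t))) p) i)"
    using continuous_on_cong by (metis (no_types, lifting))
qed

lemma has_derivative_integral_cbox_param:
  fixes \<Psi> :: "'a::euclidean_space \<times> 'b::euclidean_space \<Rightarrow> real"
  assumes A: "open A" and s: "smooth_on (A \<times> UNIV) \<Psi>" and x0: "x0 \<in> A"
  shows "((\<lambda>x. integral (cbox a b) (\<lambda>t. \<Psi> (x, t))) has_derivative
    (\<lambda>v. integral (cbox a b) (\<lambda>t. dderiv [(v, 0)] \<Psi> (x0, t)))) (at x0)"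
proof -
  obtain r where r: "r > 0" "ball x0 r \<subseteq> A" using A x0 open_contains_ball by blast
  define fx where "fx x t = Blinfun (\<lambda>v. dderiv [(v, 0)] \<Psi> (x, t))" for x t
  have fxa: "blinfun_apply (fx x t) = (\<lambda>v. dderiv [(v, 0)] \<Psi> (x, t))" if "x \<in> A" for x t
    unfolding fx_def
    by (rule bounded_linear_Blinfun_apply[OF has_derivative_bounded_linear[OF has_derivative_partial[OF s that]]])
  have cfx: "continuous_on (ball x0 r \<times> cbox a b) (\<lambda>(x, t). fx x t)"
    unfolding fx_def by (rule continuous_on_partial_blinfun[OF s]) (use r in auto)
  have "((\<lambda>x. integral (cbox a b) (\<lambda>t. \<Psi> (x, t))) has_derivative integral (cbox a b) (fx x0)) (at x0 within ball x0 r)"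
  proof (rule leibniz_rule)
    fix x t assume "x \<in> ball x0 r" "t \<in> cbox a b"
    hence xA: "x \<in> A" using r by auto
    show "((\<lambda>x. \<Psi> (x, t)) has_derivative blinfun_apply (fx x t)) (at x within ball x0 r)"
      using has_derivative_partial[OF s xA] fxa[OF xA] has_derivative_at_withinI by metis
  next
    fix x assume "x \<in> ball x0 r"
    hence "x \<in> A" using r by auto
    hence "continuous_on UNIV (\<lambda>t. dderiv [] \<Psi> (x, t))"
      by (intro continuous_on_compose2[OF smooth_on_continuous[OF s]]) (auto intro!: continuous_intros)
    thus "(\<lambda>t. \<Psi> (x, t)) integrable_on cbox a b"
      by (auto intro: integrable_continuous continuous_on_subset)
  qed (use r cfx in auto)
  hence "((\<lambda>x. integral (cbox a b) (\<lambda>t. \<Psi> (x, t))) has_derivative integral (cbox a b) (fx x0)) (at x0)"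
    using r at_within_open[of x0 "ball x0 r"] by simp
  moreover have "blinfun_apply (integral (cbox a b) (fx x0)) = (\<lambda>v. integral (cbox a b) (\<lambda>t. dderiv [(v, 0)] \<Psi> (x0, t)))"
  proof
    fix v
    have "continuous_on (cbox a b) (fx x0)"
      by (rule continuous_on_compose2[OF cfx, of _ "\<lambda>t. (x0, t)", simplified])
        (use r in \<open>auto intro!: continuous_intros\<close>)
    hence "blinfun_apply (integral (cbox a b) (fx x0)) v = integral (cbox a b) (\<lambda>t. blinfun_apply (fx x0 t) v)"
      by (intro blinfun_apply_integral integrable_continuous)
    thus "blinfun_apply (integral (cbox a b) (fx x0)) v = integral (cbox a b) (\<lambda>t. dderiv [(v, 0)] \<Psi> (x0, t))"
      using fxa[OF x0] by simp
  qed
  ultimately show ?thesis by simp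
qed

lemma has_derivative_lborel_integral_param:
  fixes \<Psi> :: "'a::euclidean_space \<times> 'b::euclidean_space \<Rightarrow> real"
  assumes A: "open A" and s: "smooth_on (A \<times> UNIV) \<Psi>" and K: "compact K"
    and z: "\<And>x t. x \<in> A \<Longrightarrow> t \<notin> K \<Longrightarrow> \<Psi> (x, t) = 0" and x0: "x0 \<in> A"
  shows "((\<lambda>x. LINT t|lborel. \<Psi> (x, t)) has_derivative (\<lambda>v. LINT t|lborel. dderiv [(v, 0)] \<Psi> (x0, t))) (at x0)"
proof -
  obtain a b where ab: "K \<subseteq> cbox a b" using K compact_imp_bounded bounded_subset_cbox_symmetric by metis
  have contx: "continuous_on UNIV (\<lambda>t. dderiv vs \<Psi> (x, t))" if "x \<in> A" for x vs
    by (rule continuous_on_compose2[OF smooth_on_continuous[OF s]]) (auto intro!: continuous_intros simp: that)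
  have zd: "dderiv vs \<Psi> (x, t) = 0" if "x \<in> A" "t \<notin> K" for x t vs
    by (rule dderiv_zero_open[of "A \<times> - K"]) (use that z open_Times[OF A open_Compl[OF compact_imp_closed[OF K]]] in auto)
  have eq: "(LINT t|lborel. dderiv vs \<Psi> (x, t)) = integral (cbox a b) (\<lambda>t. dderiv vs \<Psi> (x, t))" if "x \<in> A" for x vs
    using lborel_integral_eq_integral_cbox(2)[OF contx[OF that]] zd[OF that] ab by blast
  have "(\<lambda>v. LINT t|lborel. dderiv [(v, 0)] \<Psi> (x0, t)) = (\<lambda>v. integral (cbox a b) (\<lambda>t. dderiv [(v, 0)] \<Psi> (x0, t)))"
    using eq[OF x0] by (intro ext) blast
  thus ?thesis
    using has_derivative_transform_within_open[OF has_derivative_integral_cbox_param[OF A s x0, of a b] A x0,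
        of "\<lambda>x. LINT t|lborel. \<Psi> (x, t)"] eq[of _ "[]"]
    by simp
qed

lemma smooth_on_lborel_integral_param:
  fixes \<Phi> :: "'a::euclidean_space \<times> 'b::euclidean_space \<Rightarrow> real"
  assumes A: "open A" and s: "smooth_on (A \<times> UNIV) \<Phi>" and K: "compact K"
    and z: "\<And>x t. x \<in> A \<Longrightarrow> t \<notin> K \<Longrightarrow> \<Phi> (x, t) = 0"
  shows "smooth_on A (\<lambda>x. LINT t|lborel. \<Phi> (x, t))"
    "\<And>vs x. x \<in> A \<Longrightarrow> dderiv vs (\<lambda>x. LINT t|lborel. \<Phi> (x, t)) x
        = (LINT t|lborel. dderiv (map (\<lambda>v. (v, 0)) vs) \<Phi> (x, t))"
proof -
  have zd: "dderiv ws \<Phi> (x, t) = 0" if "x \<in> A" "t \<notin> K" for x t ws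
    by (rule dderiv_zero_open[of "A \<times> - K"]) (use that z open_Times[OF A open_Compl[OF compact_imp_closed[OF K]]] in auto)
  have D: "((\<lambda>x. LINT t|lborel. dderiv (map (\<lambda>v. (v, 0)) vs) \<Phi> (x, t)) has_derivative
      (\<lambda>v. LINT t|lborel. dderiv (map (\<lambda>v. (v, 0)) (v # vs)) \<Phi> (x, t))) (at x)" if x: "x \<in> A" for vs x
    using has_derivative_lborel_integral_param[OF A smooth_on_dderiv[OF s] K zd x] by simp
  note F = smooth_on_dderiv_formula[where F="\<lambda>vs x. LINT t|lborel. dderiv (map (\<lambda>v. (v, 0)) vs) \<Phi> (x, t)", OF A _ D]
  show "smooth_on A (\<lambda>x. LINT t|lborel. \<Phi> (x, t))"
    "\<And>vs x. x \<in> A \<Longrightarrow> dderiv vs (\<lambda>x. LINT t|lborel. \<Phi> (x, t)) x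
        = (LINT t|lborel. dderiv (map (\<lambda>v. (v, 0)) vs) \<Phi> (x, t))"
    using F by auto
qed

lemma lborel_integral_translate:
  fixes F :: "'b::euclidean_space \<Rightarrow> real"
  assumes "continuous_on UNIV F"
  shows "(LINT t|lborel. F (t + c)) = (LINT t|lborel. F t)"
proof -
  have "(LINT t|lborel. F t) = integral\<^sup>L (distr lborel borel ((+) c)) F"
    by (simp add: lborel_distr_plus)
  also have "\<dots> = (LINT t|lborel. F (c + t))"
    by (rule integral_distr) (auto intro: borel_measurable_continuous_onI[OF assms])
  finally show ?thesis by (simp add: add.commute)
qed

text \<open>Differentiating the translation invariance of the integral,
  \<open>s \<mapsto> \<integral> F (t + s e) dt\<close>, at \<open>s = 0\<close>.\<close>

lemma lborel_integral_dderiv_eq_0: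
  fixes F :: "'b::euclidean_space \<Rightarrow> real"
  assumes s: "smooth_on UNIV F" and K: "compact K" and z: "\<And>t. t \<notin> K \<Longrightarrow> F t = 0"
  shows "(LINT t|lborel. dderiv [e] F t) = 0"
proof -
  define L where "L = (\<lambda>p::real \<times> 'b. snd p + fst p *\<^sub>R e)"
  have bl: "bounded_linear L" unfolding L_def
    by (auto intro!: bounded_linear_add bounded_linear_snd bounded_linear_scaleR_left bounded_linear_fst
        intro: bounded_linear_compose[of "\<lambda>r. r *\<^sub>R e"])
  note sp = smooth_on_comp_affine[OF s bl, where c=0]
  have sp1: "smooth_on (ball 0 1 \<times> UNIV) (\<lambda>p. F (L p))"
    using smooth_on_subset[OF sp(1), of "ball 0 1 \<times> UNIV"] by (simp add: open_Times)
  define K' where "K' = (\<lambda>(k, s). k - s *\<^sub>R e) ` (K \<times> cball (0::real) 1)"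
  have cK': "compact K'" unfolding K'_def
    by (rule compact_continuous_image) (auto intro!: continuous_intros compact_Times K simp: case_prod_beta)
  have zz: "F (L (x, t)) = 0" if "x \<in> ball 0 1" "t \<notin> K'" for x t
  proof (rule z, rule notI)
    assume "L (x, t) \<in> K"
    hence "t \<in> K'" unfolding K'_def L_def using that(1)
      by (auto intro!: image_eqI[of _ _ "(t + x *\<^sub>R e, x)"])
    thus False using that by simp
  qed
  have lin: "linear (\<lambda>v. dderiv [v] F t)" for t using linear_dderiv_Cons[OF s, of t "[]"] by simp
  have "dderiv [(v, 0)] (\<lambda>p. F (L p)) (0, t) = v * dderiv [e] F t" for v t
  proof -
    have "dderiv [(v, 0)] (\<lambda>p. F (L p)) (0, t) = dderiv [v *\<^sub>R e] F t"
      using sp(2)[of "(0, t)" "[(v, 0)]"] by (simp add: L_def)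
    also have "\<dots> = v * dderiv [e] F t" using linear_scale[OF lin[of t], of v e] by simp
    finally show ?thesis .
  qed
  hence "((\<lambda>x. LINT t|lborel. F (L (x, t))) has_derivative (\<lambda>v. v * (LINT t|lborel. dderiv [e] F t))) (at 0)"
    using has_derivative_lborel_integral_param[OF _ sp1 cK' zz, of 0] by simp
  moreover have "(\<lambda>x. LINT t|lborel. F (L (x, t))) = (\<lambda>x. LINT t|lborel. F t)"
    unfolding L_def using lborel_integral_translate[OF smooth_on_continuous[OF s, of "[]"]] by simp
  ultimately have "((\<lambda>x::real. LINT t|lborel. F t) has_derivative (\<lambda>v. v * (LINT t|lborel. dderiv [e] F t))) (at 0)"
    by simp
  moreover have "((\<lambda>x::real. LINT t|lborel. F t) has_derivative (\<lambda>v. 0)) (at 0)" by (rule has_derivative_const)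
  ultimately have "(\<lambda>v::real. v * (LINT t|lborel. dderiv [e] F t)) = (\<lambda>v. 0)"
    using has_derivative_unique by blast
  from fun_cong[OF this, of 1] show ?thesis by simp
qed

lemma smooth_on_Pair_zero:
  "smooth_on Q (F :: 'a::real_normed_vector \<Rightarrow> 'b::real_normed_vector) \<Longrightarrow> smooth_on Q (\<lambda>p. (F p, 0::'c::real_normed_vector))"
  using smooth_on_bounded_linear_comp(1)[OF _ bounded_linear_Pair_zero] by blast

lemma frechet_derivative_slice:
  fixes G :: "'a::real_normed_vector \<times> 'b::real_normed_vector \<Rightarrow> 'c::euclidean_space"
  assumes G: "smooth_on Q G" and zy: "(z, y) \<in> Q"
  shows "frechet_derivative (\<lambda>z. G (z, y)) (at z) w = (\<Sum>e\<in>Basis. dderiv [(w, 0)] (\<lambda>p. G p \<bullet> e) (z, y) *\<^sub>R e)"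
proof -
  have "frechet_derivative (\<lambda>z. G (z, y)) (at z) w = (\<Sum>e\<in>Basis. (dderiv [w] (\<lambda>z. G (z, y)) z \<bullet> e) *\<^sub>R e)"
    by (simp add: euclidean_representation)
  also have "\<dots> = (\<Sum>e\<in>Basis. dderiv [(w, 0)] (\<lambda>p. G p \<bullet> e) (z, y) *\<^sub>R e)"
  proof (rule sum.cong[OF refl])
    fix e :: 'c
    have "dderiv [w] (\<lambda>z. G (z, y)) z \<bullet> e = dderiv [w] (\<lambda>z. G (z, y) \<bullet> e) z"
      using smooth_on_bounded_linear_comp(2)[OF smooth_on_slice(1)[OF G, of y] bounded_linear_inner_left[of e], of z "[w]"] zy
      by simp
    also have "\<dots> = dderiv [(w, 0)] (\<lambda>p. G p \<bullet> e) (z, y)"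
      using smooth_on_slice(2)[OF smooth_on_inner_const[OF G] zy, of "[w]"] by simp
    finally show "(dderiv [w] (\<lambda>z. G (z, y)) z \<bullet> e) *\<^sub>R e = dderiv [(w, 0)] (\<lambda>p. G p \<bullet> e) (z, y) *\<^sub>R e"
      by simp
  qed
  finally show ?thesis .
qed

text \<open>The Lie bracket in the first variable of two fields depending on a parameter, written
  so that it is visibly smooth jointly in both variables.\<close>

definition partial_lie_br ::
  "('a::euclidean_space \<times> 'b::euclidean_space \<Rightarrow> 'a) \<Rightarrow> ('a \<times> 'b \<Rightarrow> 'a) \<Rightarrow> 'a \<times> 'b \<Rightarrow> 'a" where
  "partial_lie_br F G p = (\<Sum>e\<in>Basis.
     (vf_apply (\<lambda>p. (F p, 0)) (\<lambda>p. G p \<bullet> e) p - vf_apply (\<lambda>p. (G p, 0)) (\<lambda>p. F p \<bullet> e) p) *\<^sub>R e)"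

lemma lie_br_slice:
  fixes F G :: "'a::euclidean_space \<times> 'b::euclidean_space \<Rightarrow> 'a"
  assumes F: "smooth_on Q F" and G: "smooth_on Q G" and zy: "(z, y) \<in> Q"
  shows "lie_br (\<lambda>z. F (z, y)) (\<lambda>z. G (z, y)) z = partial_lie_br F G (z, y)"
  unfolding lie_br_def partial_lie_br_def frechet_derivative_slice[OF F zy] frechet_derivative_slice[OF G zy]
    vf_apply_def
  by (simp add: sum_subtractf scaleR_diff_left)

lemma smooth_on_partial_lie_br:
  fixes F G :: "'a::euclidean_space \<times> 'b::euclidean_space \<Rightarrow> 'a"
  assumes F: "smooth_on Q F" and G: "smooth_on Q G"
  shows "smooth_on Q (partial_lie_br F G)"
  unfolding partial_lie_br_def[abs_def]
  by (rule smooth_on_sum[OF _ smooth_on_open[OF F]])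
    (auto intro!: smooth_on_scaleR_const smooth_on_diff smooth_on_vf_apply smooth_on_inner_const
      smooth_on_Pair_zero F G)

fun partial_brk_eval :: "(nat \<Rightarrow> 'a::euclidean_space \<times> 'b::euclidean_space \<Rightarrow> 'a) \<Rightarrow> brk \<Rightarrow> 'a \<times> 'b \<Rightarrow> 'a" where
  "partial_brk_eval F (Gen i) = F i"
| "partial_brk_eval F (Br a b) = partial_lie_br (partial_brk_eval F a) (partial_brk_eval F b)"

lemma partial_brk_eval_slice:
  fixes F :: "nat \<Rightarrow> 'a::euclidean_space \<times> 'b::euclidean_space \<Rightarrow> 'a"
  assumes F: "\<And>i. i \<in> brk_gens b \<Longrightarrow> smooth_on Q (F i)"
    and Y: "\<And>i z. i \<in> brk_gens b \<Longrightarrow> (z, y) \<in> Q \<Longrightarrow> Y i z = F i (z, y)"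
  shows "smooth_on Q (partial_brk_eval F b) \<and> (\<forall>z. (z, y) \<in> Q \<longrightarrow> brk_eval Y b z = partial_brk_eval F b (z, y))"
  using F Y
proof (induction b)
  case (Gen i) thus ?case by auto
next
  case (Br a b)
  have sa: "smooth_on Q (partial_brk_eval F a)"
    and ea: "\<And>z. (z, y) \<in> Q \<Longrightarrow> brk_eval Y a z = partial_brk_eval F a (z, y)"
    using Br.IH(1)[OF Br.prems(1) Br.prems(2)] by auto
  have sb: "smooth_on Q (partial_brk_eval F b)"
    and eb: "\<And>z. (z, y) \<in> Q \<Longrightarrow> brk_eval Y b z = partial_brk_eval F b (z, y)"
    using Br.IH(2)[OF Br.prems(1) Br.prems(2)] by auto
  have oy: "open {z. (z, y) \<in> Q}" using open_slice[OF smooth_on_open[OF sa]] .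
  have "brk_eval Y (Br a b) z = partial_brk_eval F (Br a b) (z, y)" if zy: "(z, y) \<in> Q" for z
  proof -
    have "frechet_derivative (brk_eval Y a) (at z) = frechet_derivative (\<lambda>z. partial_brk_eval F a (z, y)) (at z)"
      "frechet_derivative (brk_eval Y b) (at z) = frechet_derivative (\<lambda>z. partial_brk_eval F b (z, y)) (at z)"
      by (rule frechet_derivative_cong_open[OF oy], use zy ea eb in auto)+
    hence "brk_eval Y (Br a b) z = lie_br (\<lambda>z. partial_brk_eval F a (z, y)) (\<lambda>z. partial_brk_eval F b (z, y)) z"
      using ea[OF zy] eb[OF zy] by (simp add: lie_br_def)
    thus ?thesis using lie_br_slice[OF sa sb zy] by simp
  qed
  thus ?case using smooth_on_partial_lie_br[OF sa sb] by simp
qed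

lemma set_integrable_continuous_closure:
  fixes f :: "'a::euclidean_space \<Rightarrow> real"
  assumes "continuous_on (closure S) f" "bounded S" "S \<in> sets borel"
  shows "set_integrable lborel S f"
proof -
  have "set_integrable lborel (closure S) f"
    unfolding set_integrable_def using borel_integrable_compact[OF _ assms(1)] assms(2) compact_closure by auto
  thus ?thesis by (rule set_integrable_subset) (use assms closure_subset in auto)
qed

lemma set_integral_sum_list:
  fixes F :: "'i \<Rightarrow> 'a \<Rightarrow> real"
  assumes "\<And>q. q \<in> set xs \<Longrightarrow> set_integrable M A (F q)"
  shows "set_integrable M A (\<lambda>x. \<Sum>q\<leftarrow>xs. F q x)"
    "(LINT x:A|M. (\<Sum>q\<leftarrow>xs. F q x)) = (\<Sum>q\<leftarrow>xs. (LINT x:A|M. F q x))"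
proof -
  have "set_integrable M A (\<lambda>x. \<Sum>q\<leftarrow>xs. F q x) \<and> (LINT x:A|M. (\<Sum>q\<leftarrow>xs. F q x)) = (\<Sum>q\<leftarrow>xs. (LINT x:A|M. F q x))"
    using assms
  proof (induction xs)
    case Nil thus ?case by (simp add: set_integrable_def set_lebesgue_integral_def)
  next
    case (Cons a xs)
    hence ih: "set_integrable M A (\<lambda>x. \<Sum>q\<leftarrow>xs. F q x)" "(LINT x:A|M. (\<Sum>q\<leftarrow>xs. F q x)) = (\<Sum>q\<leftarrow>xs. (LINT x:A|M. F q x))"
      by auto
    have fa: "set_integrable M A (F a)" using Cons.prems by simp
    show ?case using set_integral_add[OF fa ih(1)] ih(2) by simp
  qed
  thus "set_integrable M A (\<lambda>x. \<Sum>q\<leftarrow>xs. F q x)"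
    "(LINT x:A|M. (\<Sum>q\<leftarrow>xs. F q x)) = (\<Sum>q\<leftarrow>xs. (LINT x:A|M. F q x))" by auto
qed

lemma set_integral_linear_le_square:
  fixes f :: "'a \<Rightarrow> real"
  assumes A: "A \<in> sets M" "emeasure M A \<noteq> \<infinity>" and f: "set_integrable M A f" and f2: "set_integrable M A (\<lambda>x. (f x)\<^sup>2)"
  shows "2 * c * (LINT x:A|M. f x) \<le> (LINT x:A|M. (f x)\<^sup>2) + c\<^sup>2 * measure M A"
proof -
  have i1: "set_integrable M A (\<lambda>x. 2 * c * f x)" using f by simp
  have ic2: "set_integrable M A (\<lambda>x. c\<^sup>2)" unfolding set_integrable_def
    using A by (simp add: integrable_indicator_iff less_top)
  have "0 \<le> (LINT x:A|M. (f x - c)\<^sup>2)"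
    unfolding set_lebesgue_integral_def by (rule integral_nonneg_AE) (auto simp: indicator_def)
  also have "(LINT x:A|M. (f x - c)\<^sup>2) = (LINT x:A|M. (f x)\<^sup>2 - 2 * c * f x + c\<^sup>2)"
    by (simp add: power2_diff algebra_simps)
  also have "\<dots> = (LINT x:A|M. (f x)\<^sup>2) - 2 * c * (LINT x:A|M. f x) + c\<^sup>2 * measure M A"
    using set_integral_add(2)[OF set_integral_diff(1)[OF f2 i1] ic2] set_integral_diff(2)[OF f2 i1]
    by (simp add: set_integral_const[OF A] mult.commute)
  finally show ?thesis by simp
qed

text \<open>If \<open>\<mu> A = 0\<close>, letting \<open>c\<close> grow in the previous inequality forces \<open>\<integral>\<^sub>A f = 0\<close>.\<close>

lemma set_integral_square_le:
  fixes f :: "'a \<Rightarrow> real"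
  assumes A: "A \<in> sets M" "emeasure M A \<noteq> \<infinity>" and f: "set_integrable M A f" and f2: "set_integrable M A (\<lambda>x. (f x)\<^sup>2)"
  shows "(LINT x:A|M. f x)\<^sup>2 \<le> measure M A * (LINT x:A|M. (f x)\<^sup>2)"
proof -
  define I1 where "I1 = (LINT x:A|M. f x)"
  define I2 where "I2 = (LINT x:A|M. (f x)\<^sup>2)"
  define \<mu> where "\<mu> = measure M A"
  have key: "2 * c * I1 \<le> I2 + c\<^sup>2 * \<mu>" for c
    unfolding I1_def I2_def \<mu>_def by (rule set_integral_linear_le_square[OF A f f2])
  have I2: "0 \<le> I2" unfolding I2_def set_lebesgue_integral_def
    by (rule integral_nonneg_AE) (auto simp: indicator_def)
  have mu: "0 \<le> \<mu>" unfolding \<mu>_def by simp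
  show ?thesis
  proof (cases "\<mu> = 0")
    case True
    have "I1 = 0"
    proof (rule ccontr)
      assume n: "I1 \<noteq> 0"
      have "2 * ((I2 + 1) / I1) * I1 \<le> I2" using key[of "(I2 + 1) / I1"] True by simp
      hence "2 * (I2 + 1) \<le> I2" using n by simp
      thus False using I2 by simp
    qed
    thus ?thesis unfolding I1_def[symmetric] I2_def[symmetric] \<mu>_def[symmetric] using True by simp
  next
    case False
    hence mpos: "0 < \<mu>" using mu by simp
    have "2 * (I1 / \<mu>) * I1 \<le> I2 + (I1 / \<mu>)\<^sup>2 * \<mu>" by (rule key)
    hence "2 * I1\<^sup>2 / \<mu> \<le> I2 + I1\<^sup>2 / \<mu>" using mpos by (simp add: power2_eq_square field_simps)
    hence "I1\<^sup>2 / \<mu> \<le> I2" by simp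
    hence "I1\<^sup>2 \<le> \<mu> * I2" using mpos by (simp add: field_simps)
    thus ?thesis unfolding I1_def I2_def \<mu>_def .
  qed
qed

lemma sum_list_squared_le:
  fixes a :: "'i \<Rightarrow> real"
  shows "(\<Sum>q\<leftarrow>xs. a q)\<^sup>2 \<le> real (length xs) * (\<Sum>q\<leftarrow>xs. (a q)\<^sup>2)"
  using sum_squared_le_sum_of_squares[of "\<lambda>i. a (xs ! i)" "{..<length xs}"]
  by (simp add: sum_list_sum_nth atLeast0LessThan mult.commute)

lemma pfst_pjoin[simp]: "pfst (pjoin a b) = a" by (simp add: pfst_def pjoin_def)
lemma psnd_pjoin[simp]: "psnd (pjoin a b) = b" by (simp add: psnd_def pjoin_def)
lemma pjoin_split[simp]: "pjoin (pfst z) (psnd z) = z"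
  by (simp add: pfst_def psnd_def pjoin_def vec_eq_iff split: sum.splits)
lemma pjoin_eq_iff: "pjoin a b = pjoin c d \<longleftrightarrow> a = c \<and> b = d"
  by (metis pfst_pjoin psnd_pjoin)
lemma pjoin_add: "pjoin (a + c) (b + d) = pjoin a b + pjoin c d"
  by (simp add: pjoin_def vec_eq_iff split: sum.splits)
lemma pjoin_scaleR: "pjoin (r *\<^sub>R a) (r *\<^sub>R b) = r *\<^sub>R pjoin a b"
  by (simp add: pjoin_def vec_eq_iff split: sum.splits)
lemma pfst_add: "pfst (a + b) = pfst a + pfst b" by (simp add: pfst_def vec_eq_iff)
lemma psnd_add: "psnd (a + b) = psnd a + psnd b" by (simp add: psnd_def vec_eq_iff)
lemma pfst_scaleR: "pfst (r *\<^sub>R a) = r *\<^sub>R pfst a" by (simp add: pfst_def vec_eq_iff)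
lemma psnd_scaleR: "psnd (r *\<^sub>R a) = r *\<^sub>R psnd a" by (simp add: psnd_def vec_eq_iff)

lemma linear_pfst: "linear pfst"
  by (rule linearI) (simp_all add: pfst_add pfst_scaleR)
lemma linear_psnd: "linear psnd"
  by (rule linearI) (simp_all add: psnd_add psnd_scaleR)
lemma bounded_linear_pfst: "bounded_linear pfst"
  using linear_pfst linear_conv_bounded_linear by blast
lemma bounded_linear_psnd: "bounded_linear psnd"
  using linear_psnd linear_conv_bounded_linear by blast
lemma linear_pjoin: "linear (\<lambda>p. pjoin (fst p) (snd p))"
  by (rule linearI) (simp_all add: pjoin_add[symmetric] pjoin_scaleR[symmetric])
lemma bounded_linear_pjoin: "bounded_linear (\<lambda>p. pjoin (fst p) (snd p))"
  using linear_pjoin linear_conv_bounded_linear by blast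
lemma bounded_linear_pjoin1: "bounded_linear (\<lambda>a. pjoin a 0)"
proof -
  have "linear (\<lambda>a. pjoin a 0)" by (rule linearI) (simp_all add: pjoin_add[symmetric] pjoin_scaleR[symmetric])
  thus ?thesis using linear_conv_bounded_linear by blast
qed
lemma bounded_linear_pjoin2: "bounded_linear (\<lambda>b. pjoin 0 b)"
proof -
  have "linear (\<lambda>b. pjoin 0 b)" by (rule linearI) (simp_all add: pjoin_add[symmetric] pjoin_scaleR[symmetric])
  thus ?thesis using linear_conv_bounded_linear by blast
qed
lemma bounded_linear_pfst_fst: "bounded_linear (\<lambda>p::(real^('p::finite + 'k::finite)) \<times> 'q::real_normed_vector. (pfst (fst p), snd p))"
  by (intro bounded_linear_Pair bounded_linear_compose[OF bounded_linear_pfst] bounded_linear_fst bounded_linear_snd)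

lemma pjoin_decomp: "pjoin a b = pjoin a 0 + pjoin 0 b"
  using pjoin_add[of a 0 0 b] by simp

lemma continuous_on_pfst[continuous_intros]: "continuous_on S f \<Longrightarrow> continuous_on S (\<lambda>x. pfst (f x))"
  by (rule bounded_linear.continuous_on[OF bounded_linear_pfst])
lemma continuous_on_psnd[continuous_intros]: "continuous_on S f \<Longrightarrow> continuous_on S (\<lambda>x. psnd (f x))"
  by (rule bounded_linear.continuous_on[OF bounded_linear_psnd])
lemma continuous_on_pjoin[continuous_intros]:
  "continuous_on S f \<Longrightarrow> continuous_on S g \<Longrightarrow> continuous_on S (\<lambda>x. pjoin (f x) (g x))"
  using bounded_linear.continuous_on[OF bounded_linear_pjoin continuous_on_Pair, of S f g] by simp

lemma Ut_pjoin[simp]: "pjoin a b \<in> Ut U U' \<longleftrightarrow> a \<in> U \<and> b \<in> U'"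
  by (simp add: Ut_def)

lemma Ut_eq: "Ut U U' = (\<lambda>p. pjoin (fst p) (snd p)) ` (U \<times> U')"
proof
  show "Ut U U' \<subseteq> (\<lambda>p. pjoin (fst p) (snd p)) ` (U \<times> U')"
  proof
    fix z assume "z \<in> Ut U U'"
    thus "z \<in> (\<lambda>p. pjoin (fst p) (snd p)) ` (U \<times> U')"
      by (intro image_eqI[of _ _ "(pfst z, psnd z)"]) (auto simp: Ut_def)
  qed
qed auto

lemma open_Ut: "open U \<Longrightarrow> open U' \<Longrightarrow> open (Ut U U')"
proof -
  assume "open U" "open U'"
  have "Ut U U' = pfst -` U \<inter> psnd -` U'" by (auto simp: Ut_def)
  moreover have "open (pfst -` U)" "open (psnd -` U')"
    using open_vimage[OF \<open>open U\<close>, of pfst] open_vimage[OF \<open>open U'\<close>, of psnd]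
      linear_continuous_on[OF bounded_linear_pfst] linear_continuous_on[OF bounded_linear_psnd] by auto
  ultimately show ?thesis by auto
qed

lemma closure_Ut: "closure (Ut U U') = Ut (closure U) (closure U')"
proof -
  have "inj (\<lambda>p. pjoin (fst p) (snd p))" by (rule injI) (auto simp: pjoin_eq_iff prod_eq_iff)
  hence "closure (Ut U U') = (\<lambda>p. pjoin (fst p) (snd p)) ` closure (U \<times> U')"
    unfolding Ut_eq using closure_injective_linear_image[OF linear_pjoin] by auto
  also have "\<dots> = Ut (closure U) (closure U')" by (simp add: closure_Times Ut_eq)
  finally show ?thesis .
qed

lemma bounded_Ut: "bounded A \<Longrightarrow> bounded B \<Longrightarrow> bounded (Ut A B)"
  unfolding Ut_eq by (intro bounded_linear_image bounded_Times bounded_linear_pjoin)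

lemma Basis_cart_eq: "(Basis :: (real^'n) set) = (\<lambda>i. axis i 1) ` UNIV"
  by (auto simp: Basis_vec_def)

lemma prod_Basis_cart: "(\<Prod>b\<in>(Basis :: (real^'n) set). f b) = (\<Prod>i\<in>UNIV. f (axis i 1))"
proof -
  have "inj (\<lambda>i::'n. axis i (1::real))" by (rule injI) (simp add: axis_eq_axis)
  thus ?thesis unfolding Basis_cart_eq by (simp add: prod.reindex)
qed

lemma box_pjoin_vimage:
  "(\<lambda>p. pjoin (fst p) (snd p)) -` box l u = box (pfst l) (pfst u) \<times> box (psnd l) (psnd u)"
  by (auto simp: mem_box_cart pfst_def psnd_def pjoin_def split: sum.splits)

lemma lborel_pjoin:
  "distr (lborel :: ((real^'p::finite) \<times> (real^'k::finite)) measure) borel (\<lambda>p. pjoin (fst p) (snd p)) = lborel"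
proof (rule lborel_eqI[symmetric])
  fix l u :: "real^('p + 'k)"
  assume le: "\<And>b. b \<in> Basis \<Longrightarrow> l \<bullet> b \<le> u \<bullet> b"
  have le': "l $ i \<le> u $ i" for i using le[of "axis i 1"] by (simp add: inner_axis)
  have m: "(\<lambda>p. pjoin (fst p) (snd p)) \<in> measurable (lborel :: ((real^'p) \<times> (real^'k)) measure) borel"
    unfolding measurable_lborel2 by (rule borel_measurable_continuous_onI) (auto intro!: continuous_intros)
  have "emeasure (distr (lborel :: ((real^'p) \<times> (real^'k)) measure) borel (\<lambda>p. pjoin (fst p) (snd p))) (box l u)
      = emeasure (lborel :: ((real^'p) \<times> (real^'k)) measure) (box (pfst l) (pfst u) \<times> box (psnd l) (psnd u))"
    by (subst emeasure_distr[OF m]) (auto simp: box_pjoin_vimage[symmetric])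
  also have "\<dots> = emeasure (lborel \<Otimes>\<^sub>M lborel) (box (pfst l) (pfst u) \<times> box (psnd l) (psnd u))"
    by (simp add: lborel_prod)
  also have "\<dots> = emeasure lborel (box (pfst l) (pfst u)) * emeasure lborel (box (psnd l) (psnd u))"
    by (rule lborel.emeasure_pair_measure_Times) auto
  also have "\<dots> = ennreal (\<Prod>a\<in>UNIV. u $ Inl a - l $ Inl a) * ennreal (\<Prod>b\<in>UNIV. u $ Inr b - l $ Inr b)"
  proof -
    have c1: "\<forall>b\<in>Basis. pfst l \<bullet> b \<le> pfst u \<bullet> b" using le' by (auto simp: Basis_cart_eq inner_axis pfst_def)
    have c2: "\<forall>b\<in>Basis. psnd l \<bullet> b \<le> psnd u \<bullet> b" using le' by (auto simp: Basis_cart_eq inner_axis psnd_def)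
    show ?thesis unfolding emeasure_lborel_box_eq using c1 c2
      by (simp add: prod_Basis_cart inner_axis pfst_def psnd_def inner_diff_left)
  qed
  also have "\<dots> = ennreal (\<Prod>i\<in>UNIV. u $ i - l $ i)"
  proof -
    have "(\<Prod>i\<in>(UNIV::('p+'k) set). u $ i - l $ i) = (\<Prod>i\<in>UNIV <+> UNIV. u $ i - l $ i)"
      by (simp add: UNIV_Plus_UNIV)
    also have "\<dots> = (\<Prod>a\<in>UNIV. u $ Inl a - l $ Inl a) * (\<Prod>b\<in>UNIV. u $ Inr b - l $ Inr b)"
      using prod.Plus[of "UNIV::'p set" "UNIV::'k set" "\<lambda>i. u $ i - l $ i"] by (simp add: o_def)
    finally show ?thesis using le' by (simp add: ennreal_mult prod_nonneg)
  qed
  also have "\<dots> = ennreal (\<Prod>b\<in>Basis. (u - l) \<bullet> b)"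
    by (simp add: prod_Basis_cart inner_axis)
  finally show "emeasure (distr (lborel :: ((real^'p) \<times> (real^'k)) measure) borel (\<lambda>p. pjoin (fst p) (snd p))) (box l u)
      = (\<Prod>b\<in>Basis. (u - l) \<bullet> b)" .
qed simp

lemma measurable_pjoin[measurable]:
  "(\<lambda>p. pjoin (fst p) (snd p)) \<in> measurable (lborel :: ((real^'p::finite) \<times> (real^'k::finite)) measure) borel"
  unfolding measurable_lborel2 by (rule borel_measurable_continuous_onI) (auto intro!: continuous_intros)

lemma set_integral_Ut_fubini:
  fixes H :: "real^('p::finite + 'k::finite) \<Rightarrow> real"
  assumes U: "U \<in> sets borel" and U': "U' \<in> sets borel" and H: "set_integrable lborel (Ut U U') H"
  shows "(LINT z:Ut U U'|lborel. H z) = (LINT x:U|lborel. LINT x':U'|lborel. H (pjoin x x'))"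
proof -
  define h where "h z = indicator (Ut U U') z *\<^sub>R H z" for z
  have ih: "integrable lborel h" using H unfolding set_integrable_def h_def by simp
  have hm: "h \<in> borel_measurable borel" using borel_measurable_integrable[OF ih] by simp
  let ?pj = "\<lambda>p::(real^'p) \<times> (real^'k). pjoin (fst p) (snd p)"
  have "(LINT z:Ut U U'|lborel. H z) = integral\<^sup>L lborel h" unfolding set_lebesgue_integral_def h_def by simp
  also have "\<dots> = integral\<^sup>L (distr lborel borel ?pj) h" by (simp add: lborel_pjoin)
  also have "\<dots> = integral\<^sup>L lborel (\<lambda>p. h (?pj p))" by (rule integral_distr[OF measurable_pjoin hm])
  also have "\<dots> = integral\<^sup>L (lborel \<Otimes>\<^sub>M lborel) (\<lambda>p. h (?pj p))" by (simp add: lborel_prod)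
  also have "\<dots> = (\<integral>x. (\<integral>y. h (pjoin x y) \<partial>lborel) \<partial>lborel)"
  proof -
    have "integrable (distr lborel borel ?pj) h" using ih by (simp add: lborel_pjoin)
    hence "integrable lborel (\<lambda>p. h (?pj p))" using integrable_distr_eq[OF measurable_pjoin hm] by simp
    hence "integrable (lborel \<Otimes>\<^sub>M lborel) (\<lambda>p. h (?pj p))" by (simp add: lborel_prod)
    from lborel_pair.integral_fst'[OF this] show ?thesis by simp
  qed
  also have "\<dots> = (LINT x:U|lborel. LINT x':U'|lborel. H (pjoin x x'))"
    unfolding set_lebesgue_integral_def h_def
    by (rule Bochner_Integration.integral_cong) (auto simp: indicator_def)
  finally show ?thesis .
qed

lemma set_integrable_Ut_fibre_integral:
  fixes H :: "real^('p::finite + 'k::finite) \<Rightarrow> real"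
  assumes U: "U \<in> sets borel" and U': "U' \<in> sets borel" and H: "set_integrable lborel (Ut U U') H"
  shows "set_integrable lborel U (\<lambda>x. LINT x':U'|lborel. H (pjoin x x'))"
proof -
  define h where "h z = indicator (Ut U U') z *\<^sub>R H z" for z
  have ih: "integrable lborel h" using H unfolding set_integrable_def h_def by simp
  have hm: "h \<in> borel_measurable borel" using borel_measurable_integrable[OF ih] by simp
  let ?pj = "\<lambda>p::(real^'p) \<times> (real^'k). pjoin (fst p) (snd p)"
  have "integrable (distr lborel borel ?pj) h" using ih by (simp add: lborel_pjoin)
  hence "integrable lborel (\<lambda>p. h (?pj p))" using integrable_distr_eq[OF measurable_pjoin hm] by simp
  hence "integrable (lborel \<Otimes>\<^sub>M lborel) (\<lambda>p. h (?pj p))" by (simp add: lborel_prod)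
  from lborel_pair.integrable_fst'[OF this]
  have "integrable lborel (\<lambda>x. \<integral>y. h (pjoin x y) \<partial>lborel)" by simp
  moreover have "(\<lambda>x. \<integral>y. h (pjoin x y) \<partial>lborel) = (\<lambda>x. indicator U x *\<^sub>R (LINT x':U'|lborel. H (pjoin x x')))"
    unfolding set_lebesgue_integral_def h_def by (rule ext) (auto simp: indicator_def)
  ultimately show ?thesis unfolding set_integrable_def by simp
qed

lemma mem_closure_Ut: "z \<in> closure (Ut A B) \<longleftrightarrow> pfst z \<in> closure A \<and> psnd z \<in> closure B"
  unfolding closure_Ut by (simp add: Ut_def)

lemma set_integrable_fibre_continuous:
  fixes g :: "real^('p::finite + 'k::finite) \<Rightarrow> real"
  assumes g: "continuous_on (closure (Ut U U')) g" and x: "x \<in> closure U" and U': "bounded U'" "U' \<in> sets borel"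
  shows "set_integrable lborel U' (\<lambda>x'. g (pjoin x x'))"
proof (rule set_integrable_continuous_closure[OF _ U'])
  have "continuous_on (closure U') (\<lambda>x'. pjoin x x')" by (intro continuous_intros)
  moreover have "(\<lambda>x'. pjoin x x') ` closure U' \<subseteq> closure (Ut U U')" using x by (auto simp: mem_closure_Ut)
  ultimately show "continuous_on (closure U') (\<lambda>x'. g (pjoin x x'))" by (rule continuous_on_compose2[OF g])
qed

lemma pjoin_zero_eq_sum_Basis: "pjoin 0 v = (\<Sum>e\<in>Basis. (v \<bullet> e) *\<^sub>R pjoin 0 e)"
proof -
  have lin: "linear (\<lambda>v. pjoin (0::real^'a::finite) (v::real^'b::finite))"
    using bounded_linear_pjoin2 bounded_linear.linear by blast
  have "pjoin (0::real^'a) v = pjoin 0 (\<Sum>e\<in>Basis. (v \<bullet> e) *\<^sub>R e)" by (simp add: euclidean_representation)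
  also have "\<dots> = (\<Sum>e\<in>Basis. (v \<bullet> e) *\<^sub>R pjoin 0 e)"
    by (simp add: linear_sum[OF lin] linear_scale[OF lin])
  finally show ?thesis .
qed

definition fibre_integral :: "(real^('p::finite + 'k::finite) \<Rightarrow> real) \<Rightarrow> real^'p \<Rightarrow> real" where
  "fibre_integral c x = (LINT x'|lborel. c (pjoin x x'))"

definition fibre_base :: "(real^'k::finite) set \<Rightarrow> (real^('p::finite + 'k)) set \<Rightarrow> (real^'p) set" where
  "fibre_base K W = {x. \<forall>x'\<in>K. pjoin x x' \<in> W}"

lemma open_fibre_base:
  assumes "compact K" "open W"
  shows "open (fibre_base K W)"
  unfolding fibre_base_def open_subopen[of "{x. \<forall>x'\<in>K. pjoin x x' \<in> W}"]
proof
  fix x0 assume "x0 \<in> {x. \<forall>x'\<in>K. pjoin x x' \<in> W}"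
  hence sub: "{x0} \<times> K \<subseteq> {p. pjoin (fst p) (snd p) \<in> W}" by auto
  have "open {p. pjoin (fst p) (snd p) \<in> W}"
    using open_vimage[OF assms(2) linear_continuous_on[OF bounded_linear_pjoin]] by (simp add: vimage_def)
  from Elementary_Topology.tube_lemma[OF assms(1) this sub]
  obtain X0 where "x0 \<in> X0" "open X0" "X0 \<times> K \<subseteq> {p. pjoin (fst p) (snd p) \<in> W}" by blast
  thus "\<exists>T. open T \<and> x0 \<in> T \<and> T \<subseteq> {x. \<forall>x'\<in>K. pjoin x x' \<in> W}" by (intro exI[of _ X0]) auto
qed

locale fibre_compact_support =
  fixes K :: "(real^'k::finite) set" and W :: "(real^('p::finite + 'k)) set" and c :: "real^('p + 'k) \<Rightarrow> real"
  assumes compact: "compact K" and smooth: "smooth_on W c" and vanish: "\<And>z. psnd z \<notin> K \<Longrightarrow> c z = 0"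
begin

lemma fibre_base_open: "open (fibre_base K W)"
  by (rule open_fibre_base[OF compact smooth_on_open[OF smooth]])

lemma open_outside: "open {z. psnd z \<notin> K}"
  using open_vimage[OF open_Compl[OF compact_imp_closed[OF compact]] linear_continuous_on[OF bounded_linear_psnd]]
  by (simp add: vimage_def)

lemma dderiv_outside: "psnd z \<notin> K \<Longrightarrow> dderiv vs c z = 0"
  by (rule dderiv_zero_open[OF open_outside]) (auto simp: vanish)

lemma smooth_on_integrand: "smooth_on (fibre_base K W \<times> UNIV) (\<lambda>p. c (pjoin (fst p) (snd p)))"
proof -
  define N1 where "N1 = {p::(real^'p) \<times> (real^'k). pjoin (fst p) (snd p) \<in> W}"
  have oN1: "open N1" unfolding N1_def
    using open_vimage[OF smooth_on_open[OF smooth] linear_continuous_on[OF bounded_linear_pjoin]]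
    by (simp add: vimage_def)
  have s1: "smooth_on N1 (\<lambda>p. c (pjoin (fst p) (snd p)))"
    using smooth_on_comp_linear[OF smooth bounded_linear_pjoin oN1] by (simp add: N1_def)
  define N2 where "N2 = {p::(real^'p) \<times> (real^'k). snd p \<notin> K}"
  have oN2: "open N2" unfolding N2_def
    using open_vimage[OF open_Compl[OF compact_imp_closed[OF compact]] continuous_on_snd[OF continuous_on_id]]
    by (simp add: vimage_def)
  have s2: "smooth_on N2 (\<lambda>p. c (pjoin (fst p) (snd p)))"
    by (rule smooth_on_cong[OF smooth_on_const[OF oN2, of 0]]) (auto simp: N2_def vanish)
  have "fibre_base K W \<times> UNIV \<subseteq> N1 \<union> N2" unfolding fibre_base_def N1_def N2_def by auto
  thus ?thesis
    using smooth_on_subset[OF smooth_on_Un[OF s1 s2]] fibre_base_open by (simp add: open_Times)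
qed

lemma dderiv_integrand:
  assumes "x \<in> fibre_base K W"
  shows "dderiv ws (\<lambda>p. c (pjoin (fst p) (snd p))) (x, t) = dderiv (map (\<lambda>p. pjoin (fst p) (snd p)) ws) c (pjoin x t)"
proof (cases "t \<in> K")
  case True
  hence "pjoin x t \<in> W" using assms by (auto simp: fibre_base_def)
  thus ?thesis using dderiv_comp_linear[OF smooth bounded_linear_pjoin, of "(x, t)"] by simp
next
  case False
  have "open {p::(real^'p) \<times> (real^'k). snd p \<notin> K}"
    using open_vimage[OF open_Compl[OF compact_imp_closed[OF compact]] continuous_on_snd[OF continuous_on_id]]
    by (simp add: vimage_def)
  hence "dderiv ws (\<lambda>p. c (pjoin (fst p) (snd p))) (x, t) = 0"
    by (rule dderiv_zero_open) (use False vanish in auto)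
  thus ?thesis using dderiv_outside[of "pjoin x t"] False by simp
qed

lemma continuous_on_fibre:
  assumes "x \<in> fibre_base K W"
  shows "continuous_on UNIV (\<lambda>t. c (pjoin x t))"
proof -
  have "continuous_on (fibre_base K W \<times> UNIV) (\<lambda>p. c (pjoin (fst p) (snd p)))"
    using smooth_on_continuous[OF smooth_on_integrand, of "[]"] by simp
  moreover have "continuous_on UNIV (\<lambda>t::real^'k. (x, t))" by (intro continuous_intros)
  ultimately show ?thesis
    using continuous_on_compose2[of "fibre_base K W \<times> UNIV" "\<lambda>p. c (pjoin (fst p) (snd p))" UNIV "\<lambda>t. (x, t)"] assms
    by auto
qed

lemma integrable_fibre:
  assumes "x \<in> fibre_base K W"
  shows "integrable lborel (\<lambda>t. c (pjoin x t))"
proof -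
  obtain lo hi where "K \<subseteq> cbox lo hi" using compact compact_imp_bounded bounded_subset_cbox_symmetric by metis
  thus ?thesis
    by (intro lborel_integral_eq_integral_cbox(1)[OF continuous_on_fibre[OF assms], of lo hi])
      (use vanish[of "pjoin x _"] in auto)
qed

lemma fibre_integral_eq_set_integral:
  assumes "x \<in> fibre_base K W" "K \<subseteq> U'" "U' \<in> sets lborel"
  shows "fibre_integral c x = (LINT x':U'|lborel. c (pjoin x x'))"
  unfolding fibre_integral_def set_lebesgue_integral_def
  by (rule Bochner_Integration.integral_cong[OF refl]) (use assms vanish[of "pjoin x _"] in \<open>auto simp: indicator_def\<close>)

lemma smooth_on_fibre_integral:
  shows "smooth_on (fibre_base K W) (fibre_integral c)"
    "\<And>vs x. x \<in> fibre_base K W \<Longrightarrow> dderiv vs (fibre_integral c) x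
       = (LINT t|lborel. dderiv (map (\<lambda>v. pjoin v 0) vs) c (pjoin x t))"
proof -
  note P = smooth_on_lborel_integral_param[OF fibre_base_open smooth_on_integrand compact]
  have z: "\<And>x t. x \<in> fibre_base K W \<Longrightarrow> t \<notin> K \<Longrightarrow> c (pjoin (fst (x, t)) (snd (x, t))) = 0"
    using vanish by simp
  show "smooth_on (fibre_base K W) (fibre_integral c)" using P(1)[OF z] unfolding fibre_integral_def[abs_def] by simp
  fix vs x assume x: "x \<in> fibre_base K W"
  show "dderiv vs (fibre_integral c) x = (LINT t|lborel. dderiv (map (\<lambda>v. pjoin v 0) vs) c (pjoin x t))"
    using P(2)[OF z x, of vs] dderiv_integrand[OF x] unfolding fibre_integral_def[abs_def]
    by (simp add: o_def)
qed

lemma fibre_integral_dderiv_fibre_direction: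
  assumes "x \<in> fibre_base K W"
  shows "(LINT t|lborel. dderiv [pjoin 0 e] c (pjoin x t)) = 0"
proof -
  have bl: "bounded_linear (\<lambda>t::real^'k. (0::real^'p, t))"
    by (rule bounded_linear_Pair) (auto intro: bounded_linear_ident bounded_linear_zero)
  note sl = smooth_on_comp_affine[OF smooth_on_integrand bl, where c="(x, 0)"]
  have "smooth_on UNIV (\<lambda>t. c (pjoin x t))" using sl(1) assms by simp
  hence "(LINT t|lborel. dderiv [e] (\<lambda>t. c (pjoin x t)) t) = 0"
    by (rule lborel_integral_dderiv_eq_0[OF _ compact]) (use vanish in auto)
  moreover have "dderiv [e] (\<lambda>t. c (pjoin x t)) t = dderiv [pjoin 0 e] c (pjoin x t)" for t
    using sl(2)[of t "[e]"] dderiv_integrand[OF assms, of "[(0, e)]" t] assms by simp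
  ultimately show ?thesis by simp
qed

end

section \<open>Conjugating a smoothing family by bounded operators\<close>

lemma smooth_clE:
  assumes "smooth_cl V f"
  obtains W g where "closure V \<subseteq> W" "smooth_on W g" "\<And>z. z \<in> closure V \<Longrightarrow> f z = g z"
  using assms unfolding smooth_cl_def by blast

definition sob_bounded_family ::
  "nat \<Rightarrow> ('y \<Rightarrow> nat \<Rightarrow> 'a::euclidean_space \<Rightarrow> 'a) \<Rightarrow> ('y \<Rightarrow> 'a \<Rightarrow> real) \<Rightarrow> 'a set
    \<Rightarrow> ('y \<Rightarrow> nat \<Rightarrow> 'b::euclidean_space \<Rightarrow> 'b) \<Rightarrow> ('y \<Rightarrow> 'b \<Rightarrow> real) \<Rightarrow> 'b set \<Rightarrow> 'y set
    \<Rightarrow> (('a \<Rightarrow> real) \<Rightarrow> ('b \<Rightarrow> real)) \<Rightarrow> bool" where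
  "sob_bounded_family d Y w V Y' w' V' T F \<longleftrightarrow>
     (\<forall>f. smooth_cl V f \<longrightarrow> smooth_cl V' (F f)) \<and>
     (\<forall>k. \<exists>C\<ge>0. \<forall>y\<in>T. \<forall>f. smooth_cl V f \<and> sob_in d (Y y) (w y) V k f \<longrightarrow>
        sob_in d (Y' y) (w' y) V' k (F f) \<and>
        sob_norm d (Y' y) (w' y) V' k (F f) \<le> C * sob_norm d (Y y) (w y) V k f)"

lemma sob_norm_nonneg:
  assumes "\<And>z. z \<in> V \<Longrightarrow> 0 \<le> w z"
  shows "0 \<le> sob_norm d Y w V k f"
  unfolding sob_norm_def set_lebesgue_integral_def
  by (intro sum_nonneg real_sqrt_ge_zero integral_nonneg_AE AE_I2) (simp add: assms indicator_def)

lemma finite_mindices: "finite (mindices d k)"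
  unfolding mindices_def using finite_lists_length_le[of "{..<d}" k] by simp

lemma set_integral_op_I_sq_le_sob_norm:
  assumes J: "J \<in> mindices d n" and w: "\<And>z. z \<in> V \<Longrightarrow> 0 \<le> w z"
  shows "(LINT z:V|lborel. (op_I Y J h z)\<^sup>2 * w z) \<le> (sob_norm d Y w V n h)\<^sup>2"
proof -
  have nn: "0 \<le> (LINT z:V|lborel. (op_I Y I h z)\<^sup>2 * w z)" for I
    unfolding set_lebesgue_integral_def by (intro integral_nonneg_AE AE_I2) (simp add: w indicator_def)
  have "sqrt (LINT z:V|lborel. (op_I Y J h z)\<^sup>2 * w z) \<le> sob_norm d Y w V n h"
    unfolding sob_norm_def using nn by (intro member_le_sum[OF J _ finite_mindices]) auto
  from power_mono[OF this, of 2] show ?thesis using nn[of J] by simp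
qed

lemma sob_cong_open:
  assumes "open V" "\<And>z. z \<in> V \<Longrightarrow> f z = g z"
  shows "sob_in d Y w V k f \<longleftrightarrow> sob_in d Y w V k g" "sob_norm d Y w V k f = sob_norm d Y w V k g"
proof -
  have c: "op_I Y J f z = op_I Y J g z" if "z \<in> V" for J z
    by (rule op_I_cong_open[OF assms that])
  have eq: "(LINT z:V|lborel. (op_I Y J f z)\<^sup>2 * w z) = (LINT z:V|lborel. (op_I Y J g z)\<^sup>2 * w z)"
    "set_integrable lborel V (\<lambda>z. (op_I Y J f z)\<^sup>2 * w z) \<longleftrightarrow> set_integrable lborel V (\<lambda>z. (op_I Y J g z)\<^sup>2 * w z)"
    for J
  proof -
    show "(LINT z:V|lborel. (op_I Y J f z)\<^sup>2 * w z) = (LINT z:V|lborel. (op_I Y J g z)\<^sup>2 * w z)"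
      using c assms(1) by (intro set_lebesgue_integral_cong) auto
    show "set_integrable lborel V (\<lambda>z. (op_I Y J f z)\<^sup>2 * w z) \<longleftrightarrow> set_integrable lborel V (\<lambda>z. (op_I Y J g z)\<^sup>2 * w z)"
      by (rule set_integrable_cong) (simp_all add: c)
  qed
  show "sob_in d Y w V k f \<longleftrightarrow> sob_in d Y w V k g" "sob_norm d Y w V k f = sob_norm d Y w V k g"
    unfolding sob_in_def sob_norm_def eq by simp_all
qed

lemma smoothing_family_conj_bound:
  assumes P: "smoothing_family d Y w V T lam P"
    and E: "sob_bounded_family d Y0 w0 V0 Y w V T E"
    and R: "sob_bounded_family d Y w V Y0 w0 V0 T R"
    and w: "\<And>y z. y \<in> T \<Longrightarrow> z \<in> V \<Longrightarrow> 0 \<le> w y z"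
  shows "\<exists>C. \<forall>y\<in>T. \<forall>f. smooth_cl V0 f \<and> sob_in d (Y0 y) (w0 y) V0 k f \<longrightarrow>
     sob_in d (Y0 y) (w0 y) V0 (k + lam) (R (P y (E f))) \<and>
     sob_norm d (Y0 y) (w0 y) V0 (k + lam) (R (P y (E f))) \<le> C * sob_norm d (Y0 y) (w0 y) V0 k f"
proof -
  have P_cl: "smooth_cl V (P y f)" if "y \<in> T" "smooth_cl V f" for y f
    using P that unfolding smoothing_family_def by blast
  have E_cl: "smooth_cl V (E f)" if "smooth_cl V0 f" for f
    using E that unfolding sob_bounded_family_def by blast
  obtain CE where CE: "0 \<le> CE" "\<And>y f. y \<in> T \<Longrightarrow> smooth_cl V0 f \<Longrightarrow> sob_in d (Y0 y) (w0 y) V0 k f \<Longrightarrow>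
      sob_in d (Y y) (w y) V k (E f) \<and> sob_norm d (Y y) (w y) V k (E f) \<le> CE * sob_norm d (Y0 y) (w0 y) V0 k f"
    using E unfolding sob_bounded_family_def by metis
  obtain CP where CP: "\<And>y f. y \<in> T \<Longrightarrow> smooth_cl V f \<Longrightarrow> sob_in d (Y y) (w y) V k f \<Longrightarrow>
      sob_in d (Y y) (w y) V (k + lam) (P y f) \<and>
      sob_norm d (Y y) (w y) V (k + lam) (P y f) \<le> CP * sob_norm d (Y y) (w y) V k f"
    using P unfolding smoothing_family_def by metis
  obtain CR where CR: "0 \<le> CR" "\<And>y g. y \<in> T \<Longrightarrow> smooth_cl V g \<Longrightarrow> sob_in d (Y y) (w y) V (k + lam) g \<Longrightarrow>
      sob_in d (Y0 y) (w0 y) V0 (k + lam) (R g) \<and>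
      sob_norm d (Y0 y) (w0 y) V0 (k + lam) (R g) \<le> CR * sob_norm d (Y y) (w y) V (k + lam) g"
    using R unfolding sob_bounded_family_def by metis
  have "sob_in d (Y0 y) (w0 y) V0 (k + lam) (R (P y (E f))) \<and>
    sob_norm d (Y0 y) (w0 y) V0 (k + lam) (R (P y (E f))) \<le> CR * max CP 0 * CE * sob_norm d (Y0 y) (w0 y) V0 k f"
    if y: "y \<in> T" and f: "smooth_cl V0 f" "sob_in d (Y0 y) (w0 y) V0 k f" for y f
  proof -
    note Ef = CE(2)[OF y f] and Pf = CP[OF y E_cl[OF f(1)] conjunct1[OF CE(2)[OF y f]]]
    note Rf = CR(2)[OF y P_cl[OF y E_cl[OF f(1)]] conjunct1[OF Pf]]
    have "sob_norm d (Y0 y) (w0 y) V0 (k + lam) (R (P y (E f)))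
        \<le> CR * sob_norm d (Y y) (w y) V (k + lam) (P y (E f))" using Rf by blast
    also have "\<dots> \<le> CR * (max CP 0 * sob_norm d (Y y) (w y) V k (E f))"
      using Pf sob_norm_nonneg[of V "w y"] w[OF y] CR(1)
      by (intro mult_left_mono) (auto intro: order_trans[OF _ mult_right_mono[of CP "max CP 0"]])
    also have "\<dots> \<le> CR * (max CP 0 * (CE * sob_norm d (Y0 y) (w0 y) V0 k f))"
      using Ef CR(1) by (intro mult_left_mono) auto
    finally show ?thesis using Rf by (simp add: mult_ac)
  qed
  thus ?thesis by blast
qed

lemma smoothing_family_conj:
  assumes P: "smoothing_family d Y w V T lam P"
    and E: "sob_bounded_family d Y0 w0 V0 Y w V T E"
    and R: "sob_bounded_family d Y w V Y0 w0 V0 T R"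
    and w: "\<And>y z. y \<in> T \<Longrightarrow> z \<in> V \<Longrightarrow> 0 \<le> w y z"
    and E_linear: "\<And>f g a b. E (\<lambda>v. a * f v + b * g v) = (\<lambda>z. a * E f z + b * E g z)"
    and R_linear: "\<And>f g h a b x. smooth_cl V f \<Longrightarrow> smooth_cl V g \<Longrightarrow>
       (\<And>z. z \<in> closure V \<Longrightarrow> h z = a * f z + b * g z) \<Longrightarrow> x \<in> closure V0 \<Longrightarrow>
       R h x = a * R f x + b * R g x"
  shows "smoothing_family d Y0 w0 V0 T lam (\<lambda>y f. R (P y (E f)))"
proof -
  have P_cl: "smooth_cl V (P y f)" if "y \<in> T" "smooth_cl V f" for y f
    using P that unfolding smoothing_family_def by blast
  have E_cl: "smooth_cl V (E f)" if "smooth_cl V0 f" for f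
    using E that unfolding sob_bounded_family_def by blast
  have R_cl: "smooth_cl V0 (R g)" if "smooth_cl V g" for g
    using R that unfolding sob_bounded_family_def by blast
  have linear: "R (P y (E (\<lambda>v. a * f v + b * g v))) x = a * R (P y (E f)) x + b * R (P y (E g)) x"
    if "y \<in> T" "smooth_cl V0 f" "smooth_cl V0 g" "x \<in> closure V0" for y f g a b x
  proof (rule R_linear[OF P_cl P_cl _ that(4)])
    fix z assume "z \<in> closure V"
    thus "P y (E (\<lambda>v. a * f v + b * g v)) z = a * P y (E f) z + b * P y (E g) z"
      using P E_cl that unfolding smoothing_family_def E_linear by blast
  qed (use that E_cl in auto)
  show ?thesis
    unfolding smoothing_family_def
    using P_cl E_cl R_cl linear smoothing_family_conj_bound[OF P E R w] by blast
qed

lemma vol_density_nonneg: "0 \<le> vol_density Y B z"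
  by (simp add: vol_density_def)


locale lifted_setting =
  fixes U :: "(real^'p::finite) set" and U' :: "(real^'k::finite) set" and T :: "(real^'q::finite) set"
    and d :: nat
    and X :: "nat \<Rightarrow> real^'q \<Rightarrow> real^'p \<Rightarrow> real^'p"
    and u :: "nat \<Rightarrow> real^'q \<Rightarrow> real^('p + 'k) \<Rightarrow> real^'k"
    and \<zeta> :: "real^'k \<Rightarrow> real"
    and B :: "'p + 'k \<Rightarrow> brk"
    and OX :: "((real^'p) \<times> (real^'q)) set" and Ou :: "((real^('p + 'k)) \<times> (real^'q)) set"
  assumes U: "open U" "bounded U"
    and U': "open U'" "bounded U'"
    and T: "bounded T"
    and OX: "open OX" "closure U \<times> closure T \<subseteq> OX" "\<And>i. i < d \<Longrightarrow> smooth_on OX (\<lambda>(x, y). X i y x)"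
    and Ou: "open Ou" "closure (Ut U U') \<times> closure T \<subseteq> Ou" "\<And>i. i < d \<Longrightarrow> smooth_on Ou (\<lambda>(z, y). u i y z)"
    and \<zeta>: "smooth_on UNIV \<zeta>" "compact (closure {x. \<zeta> x \<noteq> 0})" "closure {x. \<zeta> x \<noteq> 0} \<subseteq> U'"
    and B_gens: "\<And>a. brk_gens (B a) \<subseteq> {..<d}"
    and B_basis: "\<forall>y\<in>closure T. \<forall>z\<in>closure (Ut U U'). det (comm_mat (lift_vf X u y) B z) \<noteq> 0"
begin

abbreviation wgt :: "real^'q \<Rightarrow> real^('p + 'k) \<Rightarrow> real" where
  "wgt y \<equiv> vol_density (lift_vf X u y) B"

definition "lift_nbhd = {p. (pfst (fst p), snd p) \<in> OX} \<inter> Ou"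

lemma open_lift_nbhd: "open lift_nbhd"
proof -
  have "open {p::(real^('p + 'k)) \<times> (real^'q). (pfst (fst p), snd p) \<in> OX}"
    using open_vimage[OF OX(1) linear_continuous_on[OF bounded_linear_pfst_fst]] by (simp add: vimage_def)
  thus ?thesis unfolding lift_nbhd_def using Ou(1) by auto
qed

lemma closure_subset_lift_nbhd: "closure (Ut U U') \<times> closure T \<subseteq> lift_nbhd"
  unfolding lift_nbhd_def using OX(2) Ou(2) by (auto simp: mem_closure_Ut)

lemma closure_subset_slice_lift_nbhd: "y \<in> closure T \<Longrightarrow> closure (Ut U U') \<subseteq> {z. (z, y) \<in> lift_nbhd}"
  using closure_subset_lift_nbhd by auto

definition "horizontal_field i p = pjoin (X i (snd p) (pfst (fst p))) 0"

lemma smooth_on_horizontal_field: "i < d \<Longrightarrow> smooth_on lift_nbhd (horizontal_field i)"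
  unfolding horizontal_field_def
  using smooth_on_bounded_linear_comp(1)[OF smooth_on_comp_linear[OF OX(3) bounded_linear_pfst_fst open_lift_nbhd]
      bounded_linear_pjoin1]
  by (auto simp: lift_nbhd_def)

lemma smooth_on_u: "i < d \<Longrightarrow> smooth_on lift_nbhd (\<lambda>p. u i (snd p) (fst p))"
  using smooth_on_subset[OF Ou(3) open_lift_nbhd] by (auto simp: lift_nbhd_def case_prod_unfold)

lemma smooth_on_lift_vf_joint: "i < d \<Longrightarrow> smooth_on lift_nbhd (\<lambda>p. lift_vf X u (snd p) i (fst p))"
proof -
  assume i: "i < d"
  have "smooth_on lift_nbhd (\<lambda>p. horizontal_field i p + pjoin 0 (u i (snd p) (fst p)))"
    by (rule smooth_on_add[OF smooth_on_horizontal_field[OF i]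
          smooth_on_bounded_linear_comp(1)[OF smooth_on_u[OF i] bounded_linear_pjoin2]])
  thus ?thesis by (simp add: horizontal_field_def lift_vf_def flip: pjoin_decomp)
qed

lemma smooth_on_lift_vf: "i < d \<Longrightarrow> smooth_on {z. (z, y) \<in> lift_nbhd} (lift_vf X u y i)"
  using smooth_on_slice(1)[OF smooth_on_lift_vf_joint, of i y] by simp

definition "lifted_brackets a = partial_brk_eval (\<lambda>i p. lift_vf X u (snd p) i (fst p)) (B a)"

lemma lifted_brackets:
  shows "smooth_on lift_nbhd (lifted_brackets a)"
    "(z, y) \<in> lift_nbhd \<Longrightarrow> brk_eval (lift_vf X u y) (B a) z = lifted_brackets a (z, y)"
proof -
  have "smooth_on lift_nbhd (\<lambda>p. lift_vf X u (snd p) i (fst p))" if "i \<in> brk_gens (B a)" for i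
    using that B_gens smooth_on_lift_vf_joint by blast
  from partial_brk_eval_slice[where Y="lift_vf X u y" and y=y, OF this]
  show "smooth_on lift_nbhd (lifted_brackets a)"
    "(z, y) \<in> lift_nbhd \<Longrightarrow> brk_eval (lift_vf X u y) (B a) z = lifted_brackets a (z, y)"
    unfolding lifted_brackets_def by auto
qed

definition "comm_det p = det (\<chi> j a. lifted_brackets a p $ j)"

lemma det_comm_mat_eq: "(z, y) \<in> lift_nbhd \<Longrightarrow> det (comm_mat (lift_vf X u y) B z) = comm_det (z, y)"
  unfolding comm_mat_def comm_det_def using lifted_brackets(2) by simp

lemma continuous_on_comm_det: "continuous_on lift_nbhd comm_det"
  unfolding comm_det_def[abs_def] det_def
  by (intro continuous_intros) (use smooth_on_continuous[OF lifted_brackets(1), where vs="[]"] in simp)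

lemma vol_density_eq: "(z, y) \<in> lift_nbhd \<Longrightarrow> wgt y z = 1 / \<bar>comm_det (z, y)\<bar>"
  unfolding vol_density_def using det_comm_mat_eq by simp

lemma continuous_on_vol_density:
  assumes "y \<in> closure T"
  shows "continuous_on (closure (Ut U U')) (wgt y)"
proof -
  have nz: "comm_det (z, y) \<noteq> 0" if "z \<in> closure (Ut U U')" for z
    using B_basis assms that closure_subset_lift_nbhd det_comm_mat_eq[of z y] by auto
  have "continuous_on (closure (Ut U U')) (\<lambda>z. 1 / \<bar>comm_det (z, y)\<bar>)"
    using assms closure_subset_lift_nbhd nz
    by (intro continuous_intros continuous_on_compose2[OF continuous_on_comm_det]) auto
  thus ?thesis
    by (rule continuous_on_cong[THEN iffD1, OF refl, rotated]) (use assms closure_subset_lift_nbhd vol_density_eq in auto)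
qed

lemma vol_density_bounds:
  obtains c C where "0 < c" "\<And>y z. y \<in> closure T \<Longrightarrow> z \<in> closure (Ut U U') \<Longrightarrow> c \<le> wgt y z \<and> wgt y z \<le> C"
proof -
  define K0 where "K0 = closure (Ut U U') \<times> closure T"
  have K0: "compact K0" unfolding K0_def
    using bounded_Ut[OF U(2) U'(2)] T by (simp add: compact_Times compact_closure)
  have nz: "comm_det p \<noteq> 0" if "p \<in> K0" for p
  proof -
    obtain z y where p: "p = (z, y)" by fastforce
    hence "(z, y) \<in> lift_nbhd" "det (comm_mat (lift_vf X u y) B z) \<noteq> 0"
      using that B_basis closure_subset_lift_nbhd unfolding K0_def by auto
    thus ?thesis using det_comm_mat_eq p by simp
  qed
  obtain m M where mM: "0 < m" "\<And>p. p \<in> K0 \<Longrightarrow> m \<le> \<bar>comm_det p\<bar> \<and> \<bar>comm_det p\<bar> \<le> M"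
  proof (cases "K0 = {}")
    case False
    have c: "continuous_on K0 (\<lambda>p. \<bar>comm_det p\<bar>)"
      using continuous_on_subset[OF continuous_on_comm_det] closure_subset_lift_nbhd
      unfolding K0_def by (intro continuous_intros) auto
    obtain p1 where "p1 \<in> K0" "\<forall>p\<in>K0. \<bar>comm_det p1\<bar> \<le> \<bar>comm_det p\<bar>"
      using continuous_attains_inf[OF K0 False c] by blast
    moreover obtain p2 where "\<forall>p\<in>K0. \<bar>comm_det p\<bar> \<le> \<bar>comm_det p2\<bar>"
      using continuous_attains_sup[OF K0 False c] by blast
    ultimately show ?thesis using nz that[of "\<bar>comm_det p1\<bar>" "\<bar>comm_det p2\<bar>"] by auto
  qed (use that[of 1 1] in auto)
  show ?thesis
  proof (rule that[of "1 / (max M m)" "1 / m"])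
    fix y z assume "y \<in> closure T" "z \<in> closure (Ut U U')"
    hence "(z, y) \<in> K0" "(z, y) \<in> lift_nbhd" using closure_subset_lift_nbhd unfolding K0_def by auto
    thus "1 / max M m \<le> wgt y z \<and> wgt y z \<le> 1 / m"
      using mM(1) mM(2)[of "(z, y)"] vol_density_eq by (auto simp: frac_le)
  qed (use mM in auto)
qed

definition "supp_\<zeta> = closure {x. \<zeta> x \<noteq> 0}"

lemma supp_\<zeta>: "compact supp_\<zeta>" "supp_\<zeta> \<subseteq> U'" "\<And>x'. x' \<notin> supp_\<zeta> \<Longrightarrow> \<zeta> x' = 0"
  using \<zeta> closure_subset[of "{x. \<zeta> x \<noteq> 0}"] unfolding supp_\<zeta>_def by auto

lemma closure_U_subset_fibre_base:
  assumes "closure (Ut U U') \<subseteq> W"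
  shows "closure U \<subseteq> fibre_base supp_\<zeta> W"
proof -
  have "pjoin x x' \<in> closure (Ut U U')" if "x \<in> closure U" "x' \<in> supp_\<zeta>" for x x'
    using that supp_\<zeta>(2) closure_subset[of U'] by (auto simp: mem_closure_Ut)
  thus ?thesis using assms unfolding fibre_base_def by blast
qed

text \<open>The weights \<open>\<phi>(z, y)\<close>: the cut-off \<open>\<zeta>\<close> and everything it turns into when fields are
  commuted past the fibre integral.\<close>

definition fibre_weight :: "((real^('p + 'k)) \<times> (real^'q) \<Rightarrow> real) \<Rightarrow> bool" where
  "fibre_weight \<phi> \<longleftrightarrow> smooth_on lift_nbhd \<phi> \<and> (\<forall>z y. psnd z \<notin> supp_\<zeta> \<longrightarrow> \<phi> (z, y) = 0)"

abbreviation "weighted_fibre_integral \<phi> y h \<equiv> fibre_integral (\<lambda>z. h z * \<phi> (z, y))"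

lemma open_outside_supp_\<zeta>: "open {p::(real^('p + 'k)) \<times> (real^'q). psnd (fst p) \<notin> supp_\<zeta>}"
proof -
  have "continuous_on UNIV (\<lambda>p::(real^('p + 'k)) \<times> (real^'q). psnd (fst p))" by (intro continuous_intros)
  from open_vimage[OF open_Compl[OF compact_imp_closed[OF supp_\<zeta>(1)]] this] show ?thesis
    by (simp add: vimage_def)
qed

lemma fibre_weight_dderiv_outside: "fibre_weight \<phi> \<Longrightarrow> psnd z \<notin> supp_\<zeta> \<Longrightarrow> dderiv vs \<phi> (z, y) = 0"
  by (rule dderiv_zero_open[OF open_outside_supp_\<zeta>]) (auto simp: fibre_weight_def)

lemma fibre_weight_\<zeta>: "fibre_weight (\<lambda>p. \<zeta> (psnd (fst p)))"
  unfolding fibre_weight_def using supp_\<zeta>(3)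
  by (auto intro: smooth_on_comp_linear[OF \<zeta>(1) bounded_linear_compose[OF bounded_linear_psnd bounded_linear_fst] open_lift_nbhd])

lemma fibre_weight_dderiv: "fibre_weight \<phi> \<Longrightarrow> fibre_weight (dderiv vs \<phi>)"
  using fibre_weight_dderiv_outside smooth_on_dderiv unfolding fibre_weight_def by blast

lemma fibre_weight_mult: "fibre_weight \<phi> \<Longrightarrow> smooth_on lift_nbhd c \<Longrightarrow> fibre_weight (\<lambda>p. c p * \<phi> p)"
  unfolding fibre_weight_def using smooth_on_mult by auto

lemma fibre_weight_vf_apply: "fibre_weight \<phi> \<Longrightarrow> smooth_on lift_nbhd V \<Longrightarrow> fibre_weight (vf_apply V \<phi>)"
  using fibre_weight_dderiv_outside[of \<phi> _ "[V _]"] smooth_on_vf_apply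
  unfolding fibre_weight_def by (auto simp: vf_apply_def)

lemma fibre_weight_add: "fibre_weight \<phi> \<Longrightarrow> fibre_weight \<psi> \<Longrightarrow> fibre_weight (\<lambda>p. \<phi> p + \<psi> p)"
  unfolding fibre_weight_def using smooth_on_add by auto

lemma fibre_weight_sum:
  assumes "finite S" "\<And>e. e \<in> S \<Longrightarrow> fibre_weight (\<phi> e)"
  shows "fibre_weight (\<lambda>p. \<Sum>e\<in>S. \<phi> e p)"
proof -
  have "smooth_on lift_nbhd (\<lambda>p. \<Sum>e\<in>S. \<phi> e p)"
    by (rule smooth_on_sum[OF assms(1) open_lift_nbhd]) (use assms(2) in \<open>auto simp: fibre_weight_def\<close>)
  thus ?thesis using assms(2) unfolding fibre_weight_def by auto
qed

lemma fibre_compact_support_weighted: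
  assumes \<phi>: "fibre_weight \<phi>" and h: "smooth_on W h"
  shows "fibre_compact_support supp_\<zeta> (W \<inter> {z. (z, y) \<in> lift_nbhd}) (\<lambda>z. h z * \<phi> (z, y))"
proof
  have "open (W \<inter> {z. (z, y) \<in> lift_nbhd})" using smooth_on_open[OF h] open_slice[OF open_lift_nbhd] by blast
  moreover have "smooth_on {z. (z, y) \<in> lift_nbhd} (\<lambda>z. \<phi> (z, y))"
    using smooth_on_slice(1) \<phi> unfolding fibre_weight_def by blast
  ultimately show "smooth_on (W \<inter> {z. (z, y) \<in> lift_nbhd}) (\<lambda>z. h z * \<phi> (z, y))"
    using smooth_on_subset[OF h] smooth_on_subset by (intro smooth_on_mult) auto
qed (use supp_\<zeta>(1) \<phi> in \<open>auto simp: fibre_weight_def\<close>)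

lemma weighted_fibre_base:
  assumes "closure (Ut U U') \<subseteq> W" "y \<in> closure T"
  shows "closure U \<subseteq> fibre_base supp_\<zeta> (W \<inter> {z. (z, y) \<in> lift_nbhd})"
  by (rule closure_U_subset_fibre_base) (use assms closure_subset_slice_lift_nbhd in blast)

lemma integrable_weighted_fibre:
  assumes "fibre_weight \<phi>" "closure (Ut U U') \<subseteq> W" "smooth_on W h" "y \<in> closure T" "x \<in> closure U"
  shows "integrable lborel (\<lambda>t. h (pjoin x t) * \<phi> (pjoin x t, y))"
  using fibre_compact_support.integrable_fibre[OF fibre_compact_support_weighted[OF assms(1,3)]]
    weighted_fibre_base[OF assms(2,4)] assms(5) by blast

lemma dderiv_weighted_fibre_integral:
  assumes "fibre_weight \<phi>" "closure (Ut U U') \<subseteq> W" "smooth_on W h" "y \<in> closure T" "x \<in> closure U"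
  shows "dderiv [v] (weighted_fibre_integral \<phi> y h) x
    = (LINT t|lborel. dderiv [pjoin v 0] (\<lambda>z. h z * \<phi> (z, y)) (pjoin x t))"
proof -
  have "x \<in> fibre_base supp_\<zeta> (W \<inter> {z. (z, y) \<in> lift_nbhd})" using weighted_fibre_base[OF assms(2,4)] assms(5) by blast
  from fibre_compact_support.smooth_on_fibre_integral(2)[OF fibre_compact_support_weighted[OF assms(1,3)] this,
      where vs="[v]"]
  show ?thesis by simp
qed

lemma smooth_on_weighted_fibre_integral:
  assumes "fibre_weight \<phi>" "closure (Ut U U') \<subseteq> W" "smooth_on W h" "y \<in> closure T"
  obtains A where "closure U \<subseteq> A" "smooth_on A (weighted_fibre_integral \<phi> y h)"
  using fibre_compact_support.smooth_on_fibre_integral(1)[OF fibre_compact_support_weighted[OF assms(1,3)]]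
    weighted_fibre_base[OF assms(2,4)] by blast

lemma dderiv_weighted_integrand:
  assumes "fibre_weight \<phi>" "smooth_on W h" "z \<in> W" "(z, y) \<in> lift_nbhd"
  shows "dderiv [w] (\<lambda>z. h z * \<phi> (z, y)) z = dderiv [w] h z * \<phi> (z, y) + h z * dderiv [(w, 0)] \<phi> (z, y)"
proof -
  have s: "smooth_on lift_nbhd \<phi>" using assms(1) by (simp add: fibre_weight_def)
  have "open (W \<inter> {z. (z, y) \<in> lift_nbhd})" using smooth_on_open[OF assms(2)] open_slice[OF open_lift_nbhd] by blast
  hence "smooth_on (W \<inter> {z. (z, y) \<in> lift_nbhd}) h" "smooth_on (W \<inter> {z. (z, y) \<in> lift_nbhd}) (\<lambda>z. \<phi> (z, y))"
    using smooth_on_subset[OF assms(2)] smooth_on_subset[OF smooth_on_slice(1)[OF s]] by auto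
  from dderiv_mult_single[OF this] show ?thesis
    using assms(3,4) smooth_on_slice(2)[OF s assms(4), of "[w]"] by simp
qed

lemma weighted_fibre_integral_by_parts:
  assumes \<psi>: "fibre_weight \<psi>" and W: "closure (Ut U U') \<subseteq> W" and h: "smooth_on W h"
    and y: "y \<in> closure T" and x: "x \<in> closure U"
  shows "(LINT t|lborel. dderiv [pjoin 0 e] h (pjoin x t) * \<psi> (pjoin x t, y))
    = - (LINT t|lborel. h (pjoin x t) * dderiv [(pjoin 0 e, 0)] \<psi> (pjoin x t, y))"
proof -
  note F = fibre_compact_support_weighted[OF \<psi> h, of y]
  have xb: "x \<in> fibre_base supp_\<zeta> (W \<inter> {z. (z, y) \<in> lift_nbhd})" using weighted_fibre_base[OF W y] x by blast
  have split: "dderiv [pjoin 0 e] (\<lambda>z. h z * \<psi> (z, y)) (pjoin x t)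
      = dderiv [pjoin 0 e] h (pjoin x t) * \<psi> (pjoin x t, y) + h (pjoin x t) * dderiv [(pjoin 0 e, 0)] \<psi> (pjoin x t, y)" for t
  proof (cases "t \<in> supp_\<zeta>")
    case True
    hence "pjoin x t \<in> W \<inter> {z. (z, y) \<in> lift_nbhd}" using xb by (auto simp: fibre_base_def)
    thus ?thesis using dderiv_weighted_integrand[OF \<psi> h] by auto
  next
    case False
    thus ?thesis
      using fibre_compact_support.dderiv_outside[OF F, of "pjoin x t"] fibre_weight_dderiv_outside[OF \<psi>, of "pjoin x t"]
        \<psi> by (auto simp: fibre_weight_def simp del: dderiv.simps)
  qed
  have "(LINT t|lborel. dderiv [pjoin 0 e] h (pjoin x t) * \<psi> (pjoin x t, y)
      + h (pjoin x t) * dderiv [(pjoin 0 e, 0)] \<psi> (pjoin x t, y)) = 0"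
    using fibre_compact_support.fibre_integral_dderiv_fibre_direction[OF F xb, of e] unfolding split .
  moreover have "integrable lborel (\<lambda>t. dderiv [pjoin 0 e] h (pjoin x t) * \<psi> (pjoin x t, y))"
    by (rule integrable_weighted_fibre[OF \<psi> W smooth_on_dderiv[OF h] y x])
  moreover have "integrable lborel (\<lambda>t. h (pjoin x t) * dderiv [(pjoin 0 e, 0)] \<psi> (pjoin x t, y))"
    by (rule integrable_weighted_fibre[OF fibre_weight_dderiv[OF \<psi>] W h y x])
  ultimately show ?thesis by (simp add: add_eq_0_iff)
qed

subsection \<open>Commuting the fields past the fibre integral\<close>

text \<open>Differentiating a weighted fibre integral along \<open>X i y\<close> differentiates the integrand
  along the horizontal part \<open>X\<^sub>i\<close> of the lifted field; its vertical part
  \<open>\<Sum>\<^sub>e u\<^sub>i\<^sub>e \<partial>\<^sub>e\<close> is moved onto the weight by integration by parts along the fibre.\<close>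

definition commutator_weight ::
  "nat \<Rightarrow> ((real^('p + 'k)) \<times> (real^'q) \<Rightarrow> real) \<Rightarrow> (real^('p + 'k)) \<times> (real^'q) \<Rightarrow> real" where
  "commutator_weight i \<phi> p = vf_apply (\<lambda>p. (horizontal_field i p, 0)) \<phi> p
     + (\<Sum>e\<in>Basis. dderiv [(pjoin 0 e, 0)] (\<lambda>q. (u i (snd q) (fst q) \<bullet> e) * \<phi> q) p)"

lemma fibre_weight_commutator_weight: "fibre_weight \<phi> \<Longrightarrow> i < d \<Longrightarrow> fibre_weight (commutator_weight i \<phi>)"
  unfolding commutator_weight_def
  by (intro fibre_weight_add fibre_weight_vf_apply fibre_weight_sum fibre_weight_dderiv fibre_weight_mult
      smooth_on_Pair_zero smooth_on_horizontal_field smooth_on_inner_const smooth_on_u) auto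

lemma dderiv_horizontal:
  assumes h: "smooth_on W h" and z: "z \<in> W"
  shows "dderiv [pjoin (X i y (pfst z)) 0] h z
    = vf_apply (lift_vf X u y i) h z - (\<Sum>e\<in>Basis. (u i y z \<bullet> e) * dderiv [pjoin 0 e] h z)"
proof -
  have lin: "linear (frechet_derivative h (at z))" using linear_dderiv_Cons[OF h z, of "[]"] by simp
  have "pjoin (X i y (pfst z)) 0 = lift_vf X u y i z - (\<Sum>e\<in>Basis. (u i y z \<bullet> e) *\<^sub>R pjoin 0 e)"
    unfolding lift_vf_def pjoin_zero_eq_sum_Basis[symmetric]
    using pjoin_decomp[of "X i y (pfst z)" "u i y z"] by (simp add: algebra_simps)
  hence "dderiv [pjoin (X i y (pfst z)) 0] h z
      = dderiv [lift_vf X u y i z] h z - (\<Sum>e\<in>Basis. (u i y z \<bullet> e) * dderiv [pjoin 0 e] h z)"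
    by (simp add: linear_diff[OF lin] linear_sum[OF lin] linear_scale[OF lin])
  thus ?thesis by (simp add: vf_apply_def)
qed

lemma dderiv_horizontal_weighted_integrand:
  assumes \<phi>: "fibre_weight \<phi>" and W: "closure (Ut U U') \<subseteq> W" and h: "smooth_on W h"
    and y: "y \<in> closure T" and x: "x \<in> closure U"
  shows "dderiv [pjoin (X i y x) 0] (\<lambda>z. h z * \<phi> (z, y)) (pjoin x t)
    = vf_apply (lift_vf X u y i) h (pjoin x t) * \<phi> (pjoin x t, y)
      + h (pjoin x t) * vf_apply (\<lambda>p. (horizontal_field i p, 0)) \<phi> (pjoin x t, y)
      - (\<Sum>e\<in>Basis. dderiv [pjoin 0 e] h (pjoin x t) * ((u i y (pjoin x t) \<bullet> e) * \<phi> (pjoin x t, y)))"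
proof (cases "t \<in> supp_\<zeta>")
  case True
  hence z: "pjoin x t \<in> W" "(pjoin x t, y) \<in> lift_nbhd"
    using weighted_fibre_base[OF W y] x by (auto simp: fibre_base_def)
  have "dderiv [pjoin (X i y x) 0] (\<lambda>z. h z * \<phi> (z, y)) (pjoin x t)
      = dderiv [pjoin (X i y x) 0] h (pjoin x t) * \<phi> (pjoin x t, y)
        + h (pjoin x t) * dderiv [(pjoin (X i y x) 0, 0)] \<phi> (pjoin x t, y)"
    by (rule dderiv_weighted_integrand[OF \<phi> h z])
  also have "dderiv [pjoin (X i y x) 0] h (pjoin x t)
      = vf_apply (lift_vf X u y i) h (pjoin x t) - (\<Sum>e\<in>Basis. (u i y (pjoin x t) \<bullet> e) * dderiv [pjoin 0 e] h (pjoin x t))"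
    using dderiv_horizontal[OF h z(1), of i y] by simp
  also have "dderiv [(pjoin (X i y x) 0, 0)] \<phi> (pjoin x t, y) = vf_apply (\<lambda>p. (horizontal_field i p, 0)) \<phi> (pjoin x t, y)"
    by (simp add: vf_apply_def horizontal_field_def)
  finally show ?thesis by (simp add: algebra_simps sum_distrib_left del: dderiv.simps)
next
  case False
  have F: "fibre_compact_support supp_\<zeta> (W \<inter> {z. (z, y) \<in> lift_nbhd}) (\<lambda>z. h z * \<phi> (z, y))"
    by (rule fibre_compact_support_weighted[OF \<phi> h])
  show ?thesis
    using fibre_compact_support.dderiv_outside[OF F, of "pjoin x t"] fibre_weight_dderiv_outside[OF \<phi>, of "pjoin x t"]
      False \<phi> by (auto simp: fibre_weight_def vf_apply_eq_dderiv simp del: dderiv.simps)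
qed

lemma weighted_fibre_integral_commutator_weight:
  assumes \<phi>: "fibre_weight \<phi>" and W: "closure (Ut U U') \<subseteq> W" and h: "smooth_on W h"
    and y: "y \<in> closure T" and i: "i < d" and x: "x \<in> closure U"
  shows "weighted_fibre_integral (commutator_weight i \<phi>) y h x
    = (LINT t|lborel. h (pjoin x t) * vf_apply (\<lambda>p. (horizontal_field i p, 0)) \<phi> (pjoin x t, y))
      - (\<Sum>e\<in>Basis. LINT t|lborel. dderiv [pjoin 0 e] h (pjoin x t) * ((u i y (pjoin x t) \<bullet> e) * \<phi> (pjoin x t, y)))"
proof -
  define f2 where "f2 t = h (pjoin x t) * vf_apply (\<lambda>p. (horizontal_field i p, 0)) \<phi> (pjoin x t, y)" for t
  define f4 where "f4 e t = h (pjoin x t) * dderiv [(pjoin 0 e, 0)] (\<lambda>q. (u i (snd q) (fst q) \<bullet> e) * \<phi> q) (pjoin x t, y)" for e t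
  have \<psi>: "fibre_weight (\<lambda>q. (u i (snd q) (fst q) \<bullet> e) * \<phi> q)" for e
    by (intro fibre_weight_mult[OF \<phi>] smooth_on_inner_const smooth_on_u[OF i])
  have i2: "integrable lborel f2" unfolding f2_def
    by (rule integrable_weighted_fibre[OF fibre_weight_vf_apply[OF \<phi> smooth_on_Pair_zero[OF smooth_on_horizontal_field[OF i]]] W h y x])
  have i4: "integrable lborel (f4 e)" for e unfolding f4_def
    by (rule integrable_weighted_fibre[OF fibre_weight_dderiv[OF \<psi>] W h y x])
  have "weighted_fibre_integral (commutator_weight i \<phi>) y h x = (LINT t|lborel. f2 t + (\<Sum>e\<in>Basis. f4 e t))"
    unfolding fibre_integral_def
    by (rule Bochner_Integration.integral_cong[OF refl])
      (simp add: f2_def f4_def commutator_weight_def distrib_left sum_distrib_left)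
  also have "\<dots> = integral\<^sup>L lborel f2 + (\<Sum>e\<in>Basis. integral\<^sup>L lborel (f4 e))"
    using i2 i4 by (simp add: Bochner_Integration.integral_add Bochner_Integration.integral_sum)
  finally show ?thesis
    using weighted_fibre_integral_by_parts[OF \<psi> W h y x]
    by (simp add: f2_def[abs_def] f4_def[abs_def] sum_negf)
qed

lemma vf_apply_weighted_fibre_integral:
  assumes \<phi>: "fibre_weight \<phi>" and W: "closure (Ut U U') \<subseteq> W" and h: "smooth_on W h"
    and y: "y \<in> closure T" and i: "i < d" and x: "x \<in> closure U"
  shows "vf_apply (X i y) (weighted_fibre_integral \<phi> y h) x
    = weighted_fibre_integral \<phi> y (vf_apply (lift_vf X u y i) h) x
      + weighted_fibre_integral (commutator_weight i \<phi>) y h x"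
proof -
  define S where "S = W \<inter> {z. (z, y) \<in> lift_nbhd}"
  have oS: "open S" unfolding S_def using smooth_on_open[OF h] open_slice[OF open_lift_nbhd] by blast
  have S1: "closure (Ut U U') \<subseteq> S" using W closure_subset_slice_lift_nbhd[OF y] unfolding S_def by blast
  have S2: "smooth_on S (vf_apply (lift_vf X u y i) h)"
    by (rule smooth_on_vf_apply[OF smooth_on_subset[OF h oS] smooth_on_subset[OF smooth_on_lift_vf[OF i] oS]])
      (auto simp: S_def)
  define f1 where "f1 t = vf_apply (lift_vf X u y i) h (pjoin x t) * \<phi> (pjoin x t, y)" for t
  define f2 where "f2 t = h (pjoin x t) * vf_apply (\<lambda>p. (horizontal_field i p, 0)) \<phi> (pjoin x t, y)" for t
  define f3 where "f3 e t = dderiv [pjoin 0 e] h (pjoin x t) * ((u i y (pjoin x t) \<bullet> e) * \<phi> (pjoin x t, y))" for e t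
  have i1: "integrable lborel f1" unfolding f1_def by (rule integrable_weighted_fibre[OF \<phi> S1 S2 y x])
  have i2: "integrable lborel f2" unfolding f2_def
    by (rule integrable_weighted_fibre[OF fibre_weight_vf_apply[OF \<phi> smooth_on_Pair_zero[OF smooth_on_horizontal_field[OF i]]] W h y x])
  have i3: "integrable lborel (f3 e)" for e unfolding f3_def
    using integrable_weighted_fibre[OF fibre_weight_mult[OF \<phi> smooth_on_inner_const[OF smooth_on_u[OF i]]]
        W smooth_on_dderiv[OF h, of "[pjoin 0 e]"] y x] by simp
  have "vf_apply (X i y) (weighted_fibre_integral \<phi> y h) x = (LINT t|lborel. f1 t + f2 t - (\<Sum>e\<in>Basis. f3 e t))"
    using dderiv_weighted_fibre_integral[OF \<phi> W h y x, of "X i y x"]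
      dderiv_horizontal_weighted_integrand[OF \<phi> W h y x, of i]
    by (simp add: vf_apply_eq_dderiv[of "X i y"] f1_def f2_def f3_def del: dderiv.simps)
  also have "\<dots> = integral\<^sup>L lborel f1 + (integral\<^sup>L lborel f2 - (\<Sum>e\<in>Basis. integral\<^sup>L lborel (f3 e)))"
    using i1 i2 i3 by (simp add: Bochner_Integration.integral_add Bochner_Integration.integral_diff
        Bochner_Integration.integral_sum)
  also have "\<dots> = weighted_fibre_integral \<phi> y (vf_apply (lift_vf X u y i) h) x
      + weighted_fibre_integral (commutator_weight i \<phi>) y h x"
    unfolding weighted_fibre_integral_commutator_weight[OF \<phi> W h y i x]
    by (simp add: fibre_integral_def f1_def[abs_def] f2_def[abs_def] f3_def[abs_def])
  finally show ?thesis .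
qed

lemma smooth_on_op_I_lift_vf:
  assumes "closure (Ut U U') \<subseteq> W" "smooth_on W h" "y \<in> closure T" "set J \<subseteq> {..<d}"
  shows "closure (Ut U U') \<subseteq> W \<inter> {z. (z, y) \<in> lift_nbhd}"
    "smooth_on (W \<inter> {z. (z, y) \<in> lift_nbhd}) (op_I (lift_vf X u y) J h)"
proof -
  have o: "open (W \<inter> {z. (z, y) \<in> lift_nbhd})" using smooth_on_open[OF assms(2)] open_slice[OF open_lift_nbhd] by blast
  show "closure (Ut U U') \<subseteq> W \<inter> {z. (z, y) \<in> lift_nbhd}" using assms(1) closure_subset_slice_lift_nbhd[OF assms(3)] by blast
  show "smooth_on (W \<inter> {z. (z, y) \<in> lift_nbhd}) (op_I (lift_vf X u y) J h)"
    using assms(4) smooth_on_subset[OF smooth_on_lift_vf o] smooth_on_subset[OF assms(2) o]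
    by (intro smooth_on_op_I) auto
qed

lemma vf_apply_sum_weighted_fibre_integral:
  assumes TL: "\<And>q. q \<in> set TL \<Longrightarrow> set (fst q) \<subseteq> {..<d} \<and> fibre_weight (snd q)"
    and W: "closure (Ut U U') \<subseteq> W" and h: "smooth_on W h" and y: "y \<in> closure T" and i: "i < d"
    and F: "\<And>x. x \<in> U \<Longrightarrow> F x = (\<Sum>q\<leftarrow>TL. weighted_fibre_integral (snd q) y (op_I (lift_vf X u y) (fst q) h) x)"
    and x: "x \<in> U"
  shows "vf_apply (X i y) F x = (\<Sum>q\<leftarrow>TL. weighted_fibre_integral (snd q) y (op_I (lift_vf X u y) (i # fst q) h) x
    + weighted_fibre_integral (commutator_weight i (snd q)) y (op_I (lift_vf X u y) (fst q) h) x)"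
proof -
  define G where "G q = weighted_fibre_integral (snd q) y (op_I (lift_vf X u y) (fst q) h)" for q
  note hq = smooth_on_op_I_lift_vf[OF W h y]
  have "G q differentiable at x" if q: "q \<in> set TL" for q
  proof -
    obtain A where "closure U \<subseteq> A" "smooth_on A (G q)"
      using smooth_on_weighted_fibre_integral[OF conjunct2[OF TL[OF q]] hq[OF conjunct1[OF TL[OF q]]] y]
      unfolding G_def by blast
    thus ?thesis
      using smooth_on_has_derivative[of A "G q" x "[]"] x closure_subset unfolding differentiable_def by auto
  qed
  moreover have "frechet_derivative F (at x) = frechet_derivative (\<lambda>x. \<Sum>q\<leftarrow>TL. G q x) (at x)"
    by (rule frechet_derivative_cong_open[OF U(1) x]) (use F in \<open>auto simp: G_def\<close>)
  ultimately have "vf_apply (X i y) F x = (\<Sum>q\<leftarrow>TL. vf_apply (X i y) (G q) x)"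
    using vf_apply_sum_list[of TL G x "X i y"] by (simp add: vf_apply_def)
  also have "\<dots> = (\<Sum>q\<leftarrow>TL. weighted_fibre_integral (snd q) y (op_I (lift_vf X u y) (i # fst q) h) x
      + weighted_fibre_integral (commutator_weight i (snd q)) y (op_I (lift_vf X u y) (fst q) h) x)"
  proof (intro arg_cong[where f=sum_list] map_cong[OF refl])
    fix q assume "q \<in> set TL"
    hence J: "set (fst q) \<subseteq> {..<d}" and w: "fibre_weight (snd q)" using TL by auto
    show "vf_apply (X i y) (G q) x = weighted_fibre_integral (snd q) y (op_I (lift_vf X u y) (i # fst q) h) x
      + weighted_fibre_integral (commutator_weight i (snd q)) y (op_I (lift_vf X u y) (fst q) h) x"
      unfolding G_def using vf_apply_weighted_fibre_integral[OF w hq[OF J] y i] x closure_subset by auto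
  qed
  finally show ?thesis .
qed

lemma op_I_weighted_fibre_integral_expansion:
  assumes \<phi>: "fibre_weight \<phi>" and I: "set I \<subseteq> {..<d}"
  shows "\<exists>TL. (\<forall>q\<in>set TL. set (fst q) \<subseteq> {..<d} \<and> length (fst q) \<le> length I \<and> fibre_weight (snd q)) \<and>
    (\<forall>y\<in>closure T. \<forall>W h. closure (Ut U U') \<subseteq> W \<and> smooth_on W h \<longrightarrow>
       (\<forall>x\<in>U. op_I (\<lambda>i. X i y) I (weighted_fibre_integral \<phi> y h) x
          = (\<Sum>q\<leftarrow>TL. weighted_fibre_integral (snd q) y (op_I (lift_vf X u y) (fst q) h) x)))"
  using I
proof (induction I)
  case Nil
  show ?case by (rule exI[of _ "[([], \<phi>)]"]) (simp add: \<phi>)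
next
  case (Cons i I)
  have i: "i < d" using Cons.prems by auto
  obtain TL where TL1: "\<forall>q\<in>set TL. set (fst q) \<subseteq> {..<d} \<and> length (fst q) \<le> length I \<and> fibre_weight (snd q)"
    and TL2: "\<forall>y\<in>closure T. \<forall>W h. closure (Ut U U') \<subseteq> W \<and> smooth_on W h \<longrightarrow>
       (\<forall>x\<in>U. op_I (\<lambda>i. X i y) I (weighted_fibre_integral \<phi> y h) x
          = (\<Sum>q\<leftarrow>TL. weighted_fibre_integral (snd q) y (op_I (lift_vf X u y) (fst q) h) x))"
    using Cons.IH Cons.prems by auto
  define TL' where "TL' = concat (map (\<lambda>q. [(i # fst q, snd q), (fst q, commutator_weight i (snd q))]) TL)"
  have "op_I (\<lambda>i. X i y) (i # I) (weighted_fibre_integral \<phi> y h) x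
      = (\<Sum>q\<leftarrow>TL'. weighted_fibre_integral (snd q) y (op_I (lift_vf X u y) (fst q) h) x)"
    if y: "y \<in> closure T" and W: "closure (Ut U U') \<subseteq> W" and h: "smooth_on W h" and x: "x \<in> U" for y W h x
    using vf_apply_sum_weighted_fibre_integral[OF _ W h y i _ x, of TL] TL1 TL2 y W h
    unfolding TL'_def sum_list_concat_pairs by simp
  moreover have "\<forall>q\<in>set TL'. set (fst q) \<subseteq> {..<d} \<and> length (fst q) \<le> length (i # I) \<and> fibre_weight (snd q)"
    unfolding TL'_def using TL1 i fibre_weight_commutator_weight by auto
  ultimately show ?case by blast
qed

subsection \<open>The estimate for the restriction\<close>

lemma fibre_weights_bounded:
  assumes "finite \<Phi>" "\<And>\<phi>. \<phi> \<in> \<Phi> \<Longrightarrow> fibre_weight \<phi>"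
  obtains C where "\<And>\<phi> y z. \<phi> \<in> \<Phi> \<Longrightarrow> y \<in> closure T \<Longrightarrow> z \<in> closure (Ut U U') \<Longrightarrow> \<bar>\<phi> (z, y)\<bar> \<le> C"
proof -
  have K0: "compact (closure (Ut U U') \<times> closure T)"
    using bounded_Ut[OF U(2) U'(2)] T by (simp add: compact_Times compact_closure)
  have "\<exists>C. \<forall>p\<in>closure (Ut U U') \<times> closure T. \<bar>\<phi> p\<bar> \<le> C" if "\<phi> \<in> \<Phi>" for \<phi>
  proof -
    have "continuous_on (closure (Ut U U') \<times> closure T) \<phi>"
      using smooth_on_continuous[of lift_nbhd \<phi> "[]"] assms(2)[OF that] continuous_on_subset closure_subset_lift_nbhd
      by (auto simp: fibre_weight_def)
    from compact_imp_bounded[OF compact_continuous_image[OF this K0]] show ?thesis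
      unfolding bounded_iff by auto
  qed
  then obtain C where "\<And>\<phi> p. \<phi> \<in> \<Phi> \<Longrightarrow> p \<in> closure (Ut U U') \<times> closure T \<Longrightarrow> \<bar>\<phi> p\<bar> \<le> C \<phi>" by metis
  hence "\<bar>\<phi> (z, y)\<bar> \<le> (\<Sum>\<psi>\<in>\<Phi>. \<bar>C \<psi>\<bar>)" if "\<phi> \<in> \<Phi>" "y \<in> closure T" "z \<in> closure (Ut U U')" for \<phi> y z
    using that member_le_sum[OF that(1) _ assms(1), of "\<lambda>\<psi>. \<bar>C \<psi>\<bar>"] by force
  thus ?thesis using that by blast
qed

lemma set_integrable_fibre_sq_weight:
  assumes W: "closure (Ut U U') \<subseteq> W" and g: "smooth_on W g" and y: "y \<in> closure T"
  shows "set_integrable lborel (Ut U U') (\<lambda>z. (g z)\<^sup>2 * wgt y z)"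
proof (rule set_integrable_continuous_closure)
  have "continuous_on (closure (Ut U U')) g"
    using smooth_on_continuous[OF g, of "[]"] continuous_on_subset W by auto
  thus "continuous_on (closure (Ut U U')) (\<lambda>z. (g z)\<^sup>2 * wgt y z)"
    by (intro continuous_intros continuous_on_vol_density[OF y])
qed (use bounded_Ut[OF U(2) U'(2)] open_Ut[OF U(1) U'(1)] in auto)

lemma weighted_fibre_integral_sq_le:
  assumes \<phi>: "fibre_weight \<phi>" and C: "\<And>z. z \<in> closure (Ut U U') \<Longrightarrow> \<bar>\<phi> (z, y)\<bar> \<le> C"
    and c: "0 < c" "\<And>z. z \<in> closure (Ut U U') \<Longrightarrow> c \<le> wgt y z"
    and W: "closure (Ut U U') \<subseteq> W" and h: "smooth_on W h" and y: "y \<in> closure T" and x: "x \<in> closure U"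
  shows "(weighted_fibre_integral \<phi> y h x)\<^sup>2
    \<le> measure lborel U' * C\<^sup>2 / c * (LINT x':U'|lborel. (h (pjoin x x'))\<^sup>2 * wgt y (pjoin x x'))"
proof -
  have U'm: "U' \<in> sets lborel" "emeasure lborel U' \<noteq> \<infinity>"
    using U'(1) emeasure_bounded_finite[OF U'(2)] by auto
  have zc: "pjoin x x' \<in> closure (Ut U U')" if "x' \<in> U'" for x'
    using x that closure_subset[of U'] by (auto simp: mem_closure_Ut)
  define f where "f x' = h (pjoin x x') * \<phi> (pjoin x x', y)" for x'
  have i1: "set_integrable lborel U' f"
    unfolding set_integrable_def f_def
    by (rule integrable_mult_indicator[OF U'm(1) integrable_weighted_fibre[OF \<phi> W h y x]])
  have "fibre_weight (\<lambda>p. \<phi> p * \<phi> p)" using \<phi> by (intro fibre_weight_mult) (auto simp: fibre_weight_def)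
  from integrable_weighted_fibre[OF this W smooth_on_mult(1)[OF h h] y x]
  have i2: "set_integrable lborel U' (\<lambda>x'. (f x')\<^sup>2)"
    unfolding set_integrable_def f_def
    by (intro integrable_mult_indicator[OF U'm(1)]) (simp add: power2_eq_square mult_ac)
  have "continuous_on (closure (Ut U U')) (\<lambda>z. (h z)\<^sup>2 * wgt y z)"
    using continuous_on_subset[OF smooth_on_continuous[OF h, of "[]"] W]
    by (intro continuous_intros continuous_on_vol_density[OF y]) simp
  from set_integrable_fibre_continuous[OF this x U'(2)]
  have i3: "set_integrable lborel U' (\<lambda>x'. (h (pjoin x x'))\<^sup>2 * wgt y (pjoin x x'))"
    using U'(1) by simp
  have "weighted_fibre_integral \<phi> y h x = (LINT x':U'|lborel. f x')"
    using fibre_compact_support.fibre_integral_eq_set_integral[OF fibre_compact_support_weighted[OF \<phi> h]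
        _ supp_\<zeta>(2) U'm(1)] weighted_fibre_base[OF W y] x unfolding f_def by blast
  hence A: "(weighted_fibre_integral \<phi> y h x)\<^sup>2 \<le> measure lborel U' * (LINT x':U'|lborel. (f x')\<^sup>2)"
    using set_integral_square_le[OF U'm i1 i2] by simp
  have "(LINT x':U'|lborel. (f x')\<^sup>2) \<le> (LINT x':U'|lborel. C\<^sup>2 / c * ((h (pjoin x x'))\<^sup>2 * wgt y (pjoin x x')))"
  proof (rule set_integral_mono[OF i2])
    show "set_integrable lborel U' (\<lambda>x'. C\<^sup>2 / c * ((h (pjoin x x'))\<^sup>2 * wgt y (pjoin x x')))"
      using i3 by simp
    fix x' assume "x' \<in> U'"
    hence z: "pjoin x x' \<in> closure (Ut U U')" by (rule zc)
    have "\<bar>\<phi> (pjoin x x', y)\<bar>\<^sup>2 \<le> C\<^sup>2" by (rule power_mono[OF C[OF z] abs_ge_zero])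
    hence "(f x')\<^sup>2 \<le> (h (pjoin x x'))\<^sup>2 * C\<^sup>2"
      unfolding f_def power_mult_distrib by (intro mult_left_mono) auto
    also have "\<dots> \<le> (h (pjoin x x'))\<^sup>2 * C\<^sup>2 * (wgt y (pjoin x x') / c)"
    proof -
      have "1 \<le> wgt y (pjoin x x') / c" using c(1) c(2)[OF z] by simp
      from mult_left_mono[OF this, of "(h (pjoin x x'))\<^sup>2 * C\<^sup>2"] show ?thesis by simp
    qed
    finally show "(f x')\<^sup>2 \<le> C\<^sup>2 / c * ((h (pjoin x x'))\<^sup>2 * wgt y (pjoin x x'))" by (simp add: field_simps)
  qed
  hence "(LINT x':U'|lborel. (f x')\<^sup>2) \<le> C\<^sup>2 / c * (LINT x':U'|lborel. (h (pjoin x x'))\<^sup>2 * wgt y (pjoin x x'))"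
    by simp
  from order_trans[OF A mult_left_mono[OF this measure_nonneg]] show ?thesis by (simp add: mult_ac)
qed

lemma set_integral_fibre_sq_weight:
  assumes W: "closure (Ut U U') \<subseteq> W" and g: "smooth_on W g" and y: "y \<in> closure T"
  shows "set_integrable lborel U (\<lambda>x. LINT x':U'|lborel. (g (pjoin x x'))\<^sup>2 * wgt y (pjoin x x'))"
    "(LINT x:U|lborel. LINT x':U'|lborel. (g (pjoin x x'))\<^sup>2 * wgt y (pjoin x x'))
      = (LINT z:Ut U U'|lborel. (g z)\<^sup>2 * wgt y z)"
  using set_integrable_Ut_fibre_integral[OF _ _ set_integrable_fibre_sq_weight[OF W g y]]
    set_integral_Ut_fubini[OF _ _ set_integrable_fibre_sq_weight[OF W g y]] U(1) U'(1) by auto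

lemma continuous_on_closure_weighted_fibre_integral:
  assumes "fibre_weight \<phi>" "closure (Ut U U') \<subseteq> W" "smooth_on W h" "y \<in> closure T"
  shows "continuous_on (closure U) (weighted_fibre_integral \<phi> y h)"
proof -
  obtain A where A: "closure U \<subseteq> A" "smooth_on A (weighted_fibre_integral \<phi> y h)"
    using smooth_on_weighted_fibre_integral[OF assms] .
  have "continuous_on A (weighted_fibre_integral \<phi> y h)" using smooth_on_continuous[OF A(2), of "[]"] by simp
  thus ?thesis using continuous_on_subset A(1) by blast
qed

lemma sum_list_weighted_fibre_integral_L2_le:
  assumes TL: "\<And>q. q \<in> set TL \<Longrightarrow> fibre_weight (snd q) \<and> smooth_on S (g q)"
    and Cw: "\<And>q z. q \<in> set TL \<Longrightarrow> z \<in> closure (Ut U U') \<Longrightarrow> \<bar>snd q (z, y)\<bar> \<le> Cw"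
    and c: "0 < c" "\<And>z. z \<in> closure (Ut U U') \<Longrightarrow> c \<le> wgt y z"
    and S: "closure (Ut U U') \<subseteq> S" and y: "y \<in> closure T"
  shows "set_integrable lborel U (\<lambda>x. (\<Sum>q\<leftarrow>TL. weighted_fibre_integral (snd q) y (g q) x)\<^sup>2)"
    "(LINT x:U|lborel. (\<Sum>q\<leftarrow>TL. weighted_fibre_integral (snd q) y (g q) x)\<^sup>2)
      \<le> real (length TL) * (measure lborel U' * Cw\<^sup>2 / c) * (\<Sum>q\<leftarrow>TL. LINT z:Ut U U'|lborel. (g q z)\<^sup>2 * wgt y z)"
proof -
  define N where "N = real (length TL)"
  define K where "K = measure lborel U' * Cw\<^sup>2 / c"
  define G where "G q x = (LINT x':U'|lborel. (g q (pjoin x x'))\<^sup>2 * wgt y (pjoin x x'))" for q x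
  have "continuous_on (closure U) (\<lambda>x. (\<Sum>q\<leftarrow>TL. weighted_fibre_integral (snd q) y (g q) x)\<^sup>2)"
    using continuous_on_closure_weighted_fibre_integral[OF _ S _ y] TL
    by (intro continuous_intros continuous_on_sum_list) auto
  from set_integrable_continuous_closure[OF this U(2)]
  show iL: "set_integrable lborel U (\<lambda>x. (\<Sum>q\<leftarrow>TL. weighted_fibre_integral (snd q) y (g q) x)\<^sup>2)"
    using U(1) by simp
  have iG: "set_integrable lborel U (G q)" and GI: "(LINT x:U|lborel. G q x) = (LINT z:Ut U U'|lborel. (g q z)\<^sup>2 * wgt y z)"
    if "q \<in> set TL" for q
    unfolding G_def using set_integral_fibre_sq_weight[OF S _ y] TL[OF that] by blast+
  have "(\<Sum>q\<leftarrow>TL. weighted_fibre_integral (snd q) y (g q) x)\<^sup>2 \<le> N * K * (\<Sum>q\<leftarrow>TL. G q x)" if x: "x \<in> U" for x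
  proof -
    have xc: "x \<in> closure U" using x closure_subset by blast
    have "(\<Sum>q\<leftarrow>TL. (weighted_fibre_integral (snd q) y (g q) x)\<^sup>2) \<le> (\<Sum>q\<leftarrow>TL. K * G q x)"
      unfolding K_def G_def using TL Cw c S y xc
      by (intro sum_list_mono weighted_fibre_integral_sq_le) auto
    hence "N * (\<Sum>q\<leftarrow>TL. (weighted_fibre_integral (snd q) y (g q) x)\<^sup>2) \<le> N * K * (\<Sum>q\<leftarrow>TL. G q x)"
      unfolding N_def by (simp add: mult_left_mono sum_list_const_mult mult.assoc)
    with sum_list_squared_le[of "\<lambda>q. weighted_fibre_integral (snd q) y (g q) x" TL]
    show ?thesis unfolding N_def by linarith
  qed
  hence "(LINT x:U|lborel. (\<Sum>q\<leftarrow>TL. weighted_fibre_integral (snd q) y (g q) x)\<^sup>2)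
      \<le> (LINT x:U|lborel. N * K * (\<Sum>q\<leftarrow>TL. G q x))"
    using iL set_integral_sum_list(1)[of TL lborel U G] iG by (intro set_integral_mono) auto
  also have "\<dots> = N * K * (\<Sum>q\<leftarrow>TL. (LINT z:Ut U U'|lborel. (g q z)\<^sup>2 * wgt y z))"
    using set_integral_sum_list(2)[of TL lborel U G] iG GI by (simp cong: map_cong)
  finally show "(LINT x:U|lborel. (\<Sum>q\<leftarrow>TL. weighted_fibre_integral (snd q) y (g q) x)\<^sup>2)
      \<le> real (length TL) * (measure lborel U' * Cw\<^sup>2 / c) * (\<Sum>q\<leftarrow>TL. LINT z:Ut U U'|lborel. (g q z)\<^sup>2 * wgt y z)"
    unfolding N_def K_def .
qed

lemma op_I_weighted_fibre_integral_L2_le: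
  assumes \<phi>: "fibre_weight \<phi>" and I: "set I \<subseteq> {..<d}" and n: "length I \<le> n"
  shows "\<exists>C\<ge>0. \<forall>y W h. y \<in> closure T \<longrightarrow> closure (Ut U U') \<subseteq> W \<longrightarrow> smooth_on W h \<longrightarrow>
      set_integrable lborel U (\<lambda>x. (op_I (\<lambda>i. X i y) I (weighted_fibre_integral \<phi> y h) x)\<^sup>2) \<and>
      (LINT x:U|lborel. (op_I (\<lambda>i. X i y) I (weighted_fibre_integral \<phi> y h) x)\<^sup>2)
        \<le> C * (sob_norm d (lift_vf X u y) (wgt y) (Ut U U') n h)\<^sup>2"
proof -
  obtain TL where TL1: "\<forall>q\<in>set TL. set (fst q) \<subseteq> {..<d} \<and> length (fst q) \<le> length I \<and> fibre_weight (snd q)"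
    and TL2: "\<forall>y\<in>closure T. \<forall>W h. closure (Ut U U') \<subseteq> W \<and> smooth_on W h \<longrightarrow>
       (\<forall>x\<in>U. op_I (\<lambda>i. X i y) I (weighted_fibre_integral \<phi> y h) x
          = (\<Sum>q\<leftarrow>TL. weighted_fibre_integral (snd q) y (op_I (lift_vf X u y) (fst q) h) x))"
    using op_I_weighted_fibre_integral_expansion[OF \<phi> I] by blast
  obtain Cw where Cw: "\<And>\<psi> y z. \<psi> \<in> snd ` set TL \<Longrightarrow> y \<in> closure T \<Longrightarrow> z \<in> closure (Ut U U') \<Longrightarrow>
      \<bar>\<psi> (z, y)\<bar> \<le> Cw"
    by (rule fibre_weights_bounded[of "snd ` set TL"]) (use TL1 in auto)
  obtain c Cu where c: "0 < c" "\<And>y z. y \<in> closure T \<Longrightarrow> z \<in> closure (Ut U U') \<Longrightarrow> c \<le> wgt y z \<and> wgt y z \<le> Cu"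
    using vol_density_bounds by blast
  define N where "N = real (length TL)"
  define K where "K = measure lborel U' * Cw\<^sup>2 / c"
  have K: "0 \<le> K" unfolding K_def using c(1) by simp
  show ?thesis
  proof (intro exI[of _ "N * K * N"] conjI allI impI)
    show "0 \<le> N * K * N" using K by (simp add: N_def)
    fix y W and h :: "real^('p + 'k) \<Rightarrow> real"
    assume y: "y \<in> closure T" and W: "closure (Ut U U') \<subseteq> W" and h: "smooth_on W h"
    have eqU: "op_I (\<lambda>i. X i y) I (weighted_fibre_integral \<phi> y h) x
        = (\<Sum>q\<leftarrow>TL. weighted_fibre_integral (snd q) y (op_I (lift_vf X u y) (fst q) h) x)" if "x \<in> U" for x
      using TL2 y W h that by auto
    note L = sum_list_weighted_fibre_integral_L2_le[where S="W \<inter> {z. (z, y) \<in> lift_nbhd}"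
        and g="\<lambda>q. op_I (lift_vf X u y) (fst q) h", OF _ _ c(1) _ _ y]
    have L1: "set_integrable lborel U (\<lambda>x. (\<Sum>q\<leftarrow>TL. weighted_fibre_integral (snd q) y (op_I (lift_vf X u y) (fst q) h) x)\<^sup>2)"
      and L2: "(LINT x:U|lborel. (\<Sum>q\<leftarrow>TL. weighted_fibre_integral (snd q) y (op_I (lift_vf X u y) (fst q) h) x)\<^sup>2)
        \<le> N * K * (\<Sum>q\<leftarrow>TL. LINT z:Ut U U'|lborel. (op_I (lift_vf X u y) (fst q) h z)\<^sup>2 * wgt y z)"
      using L[of TL Cw] TL1 smooth_on_op_I_lift_vf(2)[OF W h y] Cw c(2) y W closure_subset_slice_lift_nbhd[OF y]
      unfolding N_def K_def by auto
    show "set_integrable lborel U (\<lambda>x. (op_I (\<lambda>i. X i y) I (weighted_fibre_integral \<phi> y h) x)\<^sup>2)"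
      using L1 by (subst set_integrable_cong[OF refl refl]) (simp_all add: eqU)
    have "(LINT x:U|lborel. (op_I (\<lambda>i. X i y) I (weighted_fibre_integral \<phi> y h) x)\<^sup>2)
        = (LINT x:U|lborel. (\<Sum>q\<leftarrow>TL. weighted_fibre_integral (snd q) y (op_I (lift_vf X u y) (fst q) h) x)\<^sup>2)"
      using U(1) eqU by (intro set_lebesgue_integral_cong) auto
    also have "\<dots> \<le> N * K * (\<Sum>q\<leftarrow>TL. LINT z:Ut U U'|lborel. (op_I (lift_vf X u y) (fst q) h z)\<^sup>2 * wgt y z)"
      by (rule L2)
    also have "\<dots> \<le> N * K * (\<Sum>q\<leftarrow>TL. (sob_norm d (lift_vf X u y) (wgt y) (Ut U U') n h)\<^sup>2)"
      using TL1 n K unfolding N_def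
      by (intro mult_left_mono sum_list_mono set_integral_op_I_sq_le_sob_norm)
        (auto simp: mindices_def vol_density_nonneg)
    finally show "(LINT x:U|lborel. (op_I (\<lambda>i. X i y) I (weighted_fibre_integral \<phi> y h) x)\<^sup>2)
        \<le> N * K * N * (sob_norm d (lift_vf X u y) (wgt y) (Ut U U') n h)\<^sup>2"
      by (simp add: N_def sum_list_triv mult_ac)
  qed
qed

lemma fibre_compact_support_\<zeta>:
  assumes "smooth_on W G"
  shows "fibre_compact_support supp_\<zeta> W (\<lambda>z. G z * \<zeta> (psnd z))"
proof
  show "smooth_on W (\<lambda>z. G z * \<zeta> (psnd z))"
    by (intro smooth_on_mult assms smooth_on_comp_linear[OF \<zeta>(1) bounded_linear_psnd smooth_on_open[OF assms]]) auto
qed (use supp_\<zeta> in auto)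

lemma Rop_eq_fibre_integral:
  assumes W: "closure (Ut U U') \<subseteq> W" and G: "smooth_on W G" and gG: "\<And>z. z \<in> closure (Ut U U') \<Longrightarrow> g z = G z"
    and x: "x \<in> closure U"
  shows "Rop U' \<zeta> g x = fibre_integral (\<lambda>z. G z * \<zeta> (psnd z)) x"
    "set_integrable lborel U' (\<lambda>x'. g (pjoin x x') * \<zeta> x')"
proof -
  note F = fibre_compact_support_\<zeta>[OF G]
  have xb: "x \<in> fibre_base supp_\<zeta> W" using closure_U_subset_fibre_base[OF W] x by blast
  have eq: "g (pjoin x x') * \<zeta> x' = G (pjoin x x') * \<zeta> (psnd (pjoin x x'))" if "x' \<in> U'" for x'
    using gG[of "pjoin x x'"] x that closure_subset[of U'] by (auto simp: mem_closure_Ut)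
  have "Rop U' \<zeta> g x = (LINT x':U'|lborel. G (pjoin x x') * \<zeta> (psnd (pjoin x x')))"
    unfolding Rop_def by (rule set_lebesgue_integral_cong) (use U'(1) eq in auto)
  also have "\<dots> = fibre_integral (\<lambda>z. G z * \<zeta> (psnd z)) x"
    using fibre_compact_support.fibre_integral_eq_set_integral[OF F xb supp_\<zeta>(2)] U'(1) by simp
  finally show "Rop U' \<zeta> g x = fibre_integral (\<lambda>z. G z * \<zeta> (psnd z)) x" .
  have "set_integrable lborel U' (\<lambda>x'. G (pjoin x x') * \<zeta> (psnd (pjoin x x')))"
    unfolding set_integrable_def using U'(1)
    by (intro integrable_mult_indicator fibre_compact_support.integrable_fibre[OF F xb]) auto
  thus "set_integrable lborel U' (\<lambda>x'. g (pjoin x x') * \<zeta> x')"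
    using set_integrable_cong[of lborel lborel U' U' "\<lambda>x'. g (pjoin x x') * \<zeta> x'"] eq by auto
qed

lemma Rop_smooth_cl: "smooth_cl (Ut U U') g \<Longrightarrow> smooth_cl U (Rop U' \<zeta> g)"
proof -
  assume "smooth_cl (Ut U U') g"
  then obtain W G where W: "closure (Ut U U') \<subseteq> W" and G: "smooth_on W G"
    and gG: "\<And>z. z \<in> closure (Ut U U') \<Longrightarrow> g z = G z"
    by (erule smooth_clE)
  note F = fibre_compact_support.smooth_on_fibre_integral(1)[OF fibre_compact_support_\<zeta>[OF G]]
  show ?thesis unfolding smooth_cl_def
    using F closure_U_subset_fibre_base[OF W] Rop_eq_fibre_integral(1)[OF W G gG]
      fibre_compact_support.fibre_base_open[OF fibre_compact_support_\<zeta>[OF G]] by blast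
qed

lemma Rop_linear:
  assumes f: "smooth_cl (Ut U U') f" and g: "smooth_cl (Ut U U') g"
    and h: "\<And>z. z \<in> closure (Ut U U') \<Longrightarrow> h z = a * f z + b * g z" and x: "x \<in> closure U"
  shows "Rop U' \<zeta> h x = a * Rop U' \<zeta> f x + b * Rop U' \<zeta> g x"
proof -
  have i: "set_integrable lborel U' (\<lambda>x'. k (pjoin x x') * \<zeta> x')" if "smooth_cl (Ut U U') k" for k
    using that by (elim smooth_clE) (use Rop_eq_fibre_integral(2) x in blast)
  have "Rop U' \<zeta> h x = (LINT x':U'|lborel. a * (f (pjoin x x') * \<zeta> x') + b * (g (pjoin x x') * \<zeta> x'))"
    unfolding Rop_def using U'(1) x h closure_subset[of U']
    by (intro set_lebesgue_integral_cong) (auto simp: mem_closure_Ut algebra_simps)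
  also have "\<dots> = a * Rop U' \<zeta> f x + b * Rop U' \<zeta> g x"
    unfolding Rop_def using set_integral_add(2)[OF set_integrable_mult_right[OF i[OF f]] set_integrable_mult_right[OF i[OF g]]]
    by simp
  finally show ?thesis .
qed

lemma op_I_Rop_L2_le:
  assumes I: "set I \<subseteq> {..<d}" and n: "length I \<le> n"
  shows "\<exists>C\<ge>0. \<forall>y\<in>closure T. \<forall>g. smooth_cl (Ut U U') g \<longrightarrow>
      set_integrable lborel U (\<lambda>x. (op_I (\<lambda>i. X i y) I (Rop U' \<zeta> g) x)\<^sup>2 * 1) \<and>
      (LINT x:U|lborel. (op_I (\<lambda>i. X i y) I (Rop U' \<zeta> g) x)\<^sup>2 * 1)
        \<le> C * (sob_norm d (lift_vf X u y) (wgt y) (Ut U U') n g)\<^sup>2"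
proof -
  define \<phi> where "\<phi> = (\<lambda>p::(real^('p + 'k)) \<times> (real^'q). \<zeta> (psnd (fst p)))"
  obtain C where C: "0 \<le> C" "\<forall>y W h. y \<in> closure T \<longrightarrow> closure (Ut U U') \<subseteq> W \<longrightarrow> smooth_on W h \<longrightarrow>
      set_integrable lborel U (\<lambda>x. (op_I (\<lambda>i. X i y) I (weighted_fibre_integral \<phi> y h) x)\<^sup>2) \<and>
      (LINT x:U|lborel. (op_I (\<lambda>i. X i y) I (weighted_fibre_integral \<phi> y h) x)\<^sup>2)
        \<le> C * (sob_norm d (lift_vf X u y) (wgt y) (Ut U U') n h)\<^sup>2"
    using op_I_weighted_fibre_integral_L2_le[OF fibre_weight_\<zeta>[folded \<phi>_def] I n] by blast
  have "set_integrable lborel U (\<lambda>x. (op_I (\<lambda>i. X i y) I (Rop U' \<zeta> g) x)\<^sup>2 * 1) \<and>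
      (LINT x:U|lborel. (op_I (\<lambda>i. X i y) I (Rop U' \<zeta> g) x)\<^sup>2 * 1)
        \<le> C * (sob_norm d (lift_vf X u y) (wgt y) (Ut U U') n g)\<^sup>2"
    if y: "y \<in> closure T" and g: "smooth_cl (Ut U U') g" for y g
  proof -
    obtain W G where W: "closure (Ut U U') \<subseteq> W" and G: "smooth_on W G"
      and gG: "\<And>z. z \<in> closure (Ut U U') \<Longrightarrow> g z = G z"
      using g by (erule smooth_clE)
    have RG: "Rop U' \<zeta> g x = weighted_fibre_integral \<phi> y G x" if "x \<in> U" for x
      using Rop_eq_fibre_integral(1)[OF W G gG] that closure_subset by (auto simp: \<phi>_def)
    have eq: "op_I (\<lambda>i. X i y) I (Rop U' \<zeta> g) x = op_I (\<lambda>i. X i y) I (weighted_fibre_integral \<phi> y G) x"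
      if "x \<in> U" for x
      by (rule op_I_cong_open[OF U(1) RG that])
    have "sob_norm d (lift_vf X u y) (wgt y) (Ut U U') n G = sob_norm d (lift_vf X u y) (wgt y) (Ut U U') n g"
      by (rule sob_cong_open(2)[OF open_Ut[OF U(1) U'(1)]]) (simp add: gG[OF subsetD[OF closure_subset]])
    moreover have "set_integrable lborel U (\<lambda>x. (op_I (\<lambda>i. X i y) I (Rop U' \<zeta> g) x)\<^sup>2 * 1)
        \<longleftrightarrow> set_integrable lborel U (\<lambda>x. (op_I (\<lambda>i. X i y) I (weighted_fibre_integral \<phi> y G) x)\<^sup>2)"
      by (rule set_integrable_cong) (simp_all add: eq)
    moreover have "(LINT x:U|lborel. (op_I (\<lambda>i. X i y) I (Rop U' \<zeta> g) x)\<^sup>2 * 1)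
        = (LINT x:U|lborel. (op_I (\<lambda>i. X i y) I (weighted_fibre_integral \<phi> y G) x)\<^sup>2)"
      using U(1) eq by (intro set_lebesgue_integral_cong) auto
    ultimately show ?thesis using C(2)[rule_format, OF y W G] by simp
  qed
  thus ?thesis using C(1) by blast
qed

lemma sob_bounded_family_Rop:
  "sob_bounded_family d (lift_vf X u) wgt (Ut U U') (\<lambda>y i. X i y) (\<lambda>y z. 1) U T (Rop U' \<zeta>)"
  unfolding sob_bounded_family_def
proof (intro conjI allI impI Rop_smooth_cl)
  fix k
  have "\<forall>I\<in>mindices d k. \<exists>C. 0 \<le> C \<and> (\<forall>y\<in>closure T. \<forall>g. smooth_cl (Ut U U') g \<longrightarrow>
      set_integrable lborel U (\<lambda>x. (op_I (\<lambda>i. X i y) I (Rop U' \<zeta> g) x)\<^sup>2 * 1) \<and>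
      (LINT x:U|lborel. (op_I (\<lambda>i. X i y) I (Rop U' \<zeta> g) x)\<^sup>2 * 1)
        \<le> C * (sob_norm d (lift_vf X u y) (wgt y) (Ut U U') k g)\<^sup>2)"
  proof
    fix I assume "I \<in> mindices d k"
    hence "set I \<subseteq> {..<d}" "length I \<le> k" by (auto simp: mindices_def)
    from op_I_Rop_L2_le[OF this] show "\<exists>C. 0 \<le> C \<and> (\<forall>y\<in>closure T. \<forall>g. smooth_cl (Ut U U') g \<longrightarrow>
      set_integrable lborel U (\<lambda>x. (op_I (\<lambda>i. X i y) I (Rop U' \<zeta> g) x)\<^sup>2 * 1) \<and>
      (LINT x:U|lborel. (op_I (\<lambda>i. X i y) I (Rop U' \<zeta> g) x)\<^sup>2 * 1)
        \<le> C * (sob_norm d (lift_vf X u y) (wgt y) (Ut U U') k g)\<^sup>2)" .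
  qed
  from bchoice[OF this] obtain CI where CI: "\<forall>I\<in>mindices d k. 0 \<le> CI I \<and> (\<forall>y\<in>closure T. \<forall>g. smooth_cl (Ut U U') g \<longrightarrow>
      set_integrable lborel U (\<lambda>x. (op_I (\<lambda>i. X i y) I (Rop U' \<zeta> g) x)\<^sup>2 * 1) \<and>
      (LINT x:U|lborel. (op_I (\<lambda>i. X i y) I (Rop U' \<zeta> g) x)\<^sup>2 * 1)
        \<le> CI I * (sob_norm d (lift_vf X u y) (wgt y) (Ut U U') k g)\<^sup>2)" ..
  have "sob_in d (\<lambda>i. X i y) (\<lambda>z. 1) U k (Rop U' \<zeta> g) \<and>
      sob_norm d (\<lambda>i. X i y) (\<lambda>z. 1) U k (Rop U' \<zeta> g)
        \<le> (\<Sum>I\<in>mindices d k. sqrt (CI I)) * sob_norm d (lift_vf X u y) (wgt y) (Ut U U') k g"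
    if y: "y \<in> T" and g: "smooth_cl (Ut U U') g" for y g
  proof -
    have "set_integrable lborel U (\<lambda>x. (op_I (\<lambda>i. X i y) I (Rop U' \<zeta> g) x)\<^sup>2 * 1) \<and>
      sqrt (LINT x:U|lborel. (op_I (\<lambda>i. X i y) I (Rop U' \<zeta> g) x)\<^sup>2 * 1)
        \<le> sqrt (CI I) * sob_norm d (lift_vf X u y) (wgt y) (Ut U U') k g" if "I \<in> mindices d k" for I
    proof -
      have yc: "y \<in> closure T" using y closure_subset by blast
      have "\<forall>y\<in>closure T. \<forall>g. smooth_cl (Ut U U') g \<longrightarrow>
        set_integrable lborel U (\<lambda>x. (op_I (\<lambda>i. X i y) I (Rop U' \<zeta> g) x)\<^sup>2 * 1) \<and>
        (LINT x:U|lborel. (op_I (\<lambda>i. X i y) I (Rop U' \<zeta> g) x)\<^sup>2 * 1)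
          \<le> CI I * (sob_norm d (lift_vf X u y) (wgt y) (Ut U U') k g)\<^sup>2"
        using bspec[OF CI that] by (rule conjunct2)
      note B = this[rule_format, OF yc g]
      have "sqrt (LINT x:U|lborel. (op_I (\<lambda>i. X i y) I (Rop U' \<zeta> g) x)\<^sup>2 * 1)
          \<le> sqrt (CI I * (sob_norm d (lift_vf X u y) (wgt y) (Ut U U') k g)\<^sup>2)"
        by (rule real_sqrt_le_mono[OF conjunct2[OF B]])
      also have "\<dots> = sqrt (CI I) * sob_norm d (lift_vf X u y) (wgt y) (Ut U U') k g"
        using sob_norm_nonneg[of "Ut U U'" "wgt y", OF vol_density_nonneg] by (simp add: real_sqrt_mult)
      finally show ?thesis using conjunct1[OF B] by blast
    qed
    thus ?thesis unfolding sob_in_def sob_norm_def[of _ "\<lambda>i. X i y"] sum_distrib_right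
      by (auto intro: sum_mono)
  qed
  moreover have "0 \<le> (\<Sum>I\<in>mindices d k. sqrt (CI I))"
    using conjunct1[OF bspec[OF CI]] by (simp add: sum_nonneg)
  ultimately show "\<exists>C\<ge>0. \<forall>y\<in>T. \<forall>g. smooth_cl (Ut U U') g \<and> sob_in d (lift_vf X u y) (wgt y) (Ut U U') k g \<longrightarrow>
      sob_in d (\<lambda>i. X i y) (\<lambda>z. 1) U k (Rop U' \<zeta> g) \<and>
      sob_norm d (\<lambda>i. X i y) (\<lambda>z. 1) U k (Rop U' \<zeta> g) \<le> C * sob_norm d (lift_vf X u y) (wgt y) (Ut U U') k g"
    by blast
qed

subsection \<open>The estimate for the extension\<close>

lemma smooth_on_op_I_X:
  assumes g: "smooth_on W g" and J: "set J \<subseteq> {..<d}"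
  shows "smooth_on (W \<inter> {x. (x, y) \<in> OX}) (op_I (\<lambda>i. X i y) J g)"
proof (rule smooth_on_op_I)
  have o: "open (W \<inter> {x. (x, y) \<in> OX})" using smooth_on_open[OF g] open_slice[OF OX(1)] by blast
  show "smooth_on (W \<inter> {x. (x, y) \<in> OX}) g" by (rule smooth_on_subset[OF g o]) auto
  fix i assume "i \<in> set J"
  hence "smooth_on {x. (x, y) \<in> OX} (X i y)" using J smooth_on_slice(1)[OF OX(3), of i y] by auto
  thus "smooth_on (W \<inter> {x. (x, y) \<in> OX}) (X i y)" by (rule smooth_on_subset[OF _ o]) auto
qed

lemma op_I_lift_vf_Eop:
  assumes g: "smooth_on W g" and J: "set J \<subseteq> {..<d}" and z: "pfst z \<in> W \<inter> {x. (x, y) \<in> OX}"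
  shows "op_I (lift_vf X u y) J (Eop g) z = op_I (\<lambda>i. X i y) J g (pfst z)"
  using J z
proof (induction J arbitrary: z)
  case Nil thus ?case by (simp add: Eop_def)
next
  case (Cons i J)
  define S where "S = {z::real^('p + 'k). pfst z \<in> W \<inter> {x. (x, y) \<in> OX}}"
  have oS: "open S" unfolding S_def
    using open_vimage[OF open_Int[OF smooth_on_open[OF g] open_slice[OF OX(1)]] linear_continuous_on[OF bounded_linear_pfst]]
    by (simp add: vimage_def)
  have F: "smooth_on (W \<inter> {x. (x, y) \<in> OX}) (op_I (\<lambda>i. X i y) J g)"
    using smooth_on_op_I_X[OF g] Cons.prems(1) by simp
  have "frechet_derivative (op_I (lift_vf X u y) J (Eop g)) (at z)
      = frechet_derivative (\<lambda>z. op_I (\<lambda>i. X i y) J g (pfst z)) (at z)"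
    by (rule frechet_derivative_cong_open[OF oS]) (use Cons S_def in auto)
  hence "op_I (lift_vf X u y) (i # J) (Eop g) z = dderiv [lift_vf X u y i z] (\<lambda>z. op_I (\<lambda>i. X i y) J g (pfst z)) z"
    by (simp add: vf_apply_def)
  also have "\<dots> = dderiv [pfst (lift_vf X u y i z)] (op_I (\<lambda>i. X i y) J g) (pfst z)"
    using dderiv_comp_linear[OF F bounded_linear_pfst, where z=z and vs="[lift_vf X u y i z]"] Cons.prems(2)
    by simp
  also have "pfst (lift_vf X u y i z) = X i y (pfst z)" by (simp add: lift_vf_def)
  finally show ?case by (simp add: vf_apply_def)
qed

lemma Eop_smooth_cl: "smooth_cl U f \<Longrightarrow> smooth_cl (Ut U U') (Eop f)"
proof -
  assume "smooth_cl U f"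
  then obtain W g where W: "closure U \<subseteq> W" and g: "smooth_on W g" and fg: "\<And>x. x \<in> closure U \<Longrightarrow> f x = g x"
    by (erule smooth_clE)
  have o: "open {z::real^('p + 'k). pfst z \<in> W}"
    using open_vimage[OF smooth_on_open[OF g] linear_continuous_on[OF bounded_linear_pfst]] by (simp add: vimage_def)
  have "smooth_on {z::real^('p + 'k). pfst z \<in> W} (Eop g)"
    unfolding Eop_def[abs_def] by (rule smooth_on_comp_linear[OF g bounded_linear_pfst o]) auto
  moreover have "closure (Ut U U') \<subseteq> {z. pfst z \<in> W}" using W by (auto simp: mem_closure_Ut)
  moreover have "\<forall>z\<in>closure (Ut U U'). Eop f z = Eop g z" using fg by (auto simp: Eop_def mem_closure_Ut)
  ultimately show ?thesis unfolding smooth_cl_def using o by blast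
qed

lemma op_I_lift_vf_Eop_smooth_cl:
  assumes f: "smooth_cl U f" and y: "y \<in> closure T" and J: "set J \<subseteq> {..<d}"
  obtains F where "continuous_on (closure U) F"
    "\<And>z. z \<in> Ut U U' \<Longrightarrow> op_I (lift_vf X u y) J (Eop f) z = F (pfst z)"
    "\<And>x. x \<in> U \<Longrightarrow> op_I (\<lambda>i. X i y) J f x = F x"
proof -
  obtain W g where W: "closure U \<subseteq> W" and g: "smooth_on W g" and fg: "\<And>x. x \<in> closure U \<Longrightarrow> f x = g x"
    using f by (erule smooth_clE)
  define F where "F = op_I (\<lambda>i. X i y) J g"
  have WOX: "closure U \<subseteq> W \<inter> {x. (x, y) \<in> OX}" using W OX(2) y by auto
  show ?thesis
  proof (rule that)
    show "continuous_on (closure U) F"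
      using smooth_on_continuous[OF smooth_on_op_I_X[OF g J], where vs="[]"] WOX
      unfolding F_def by (auto intro: continuous_on_subset)
  next
    fix z assume z: "z \<in> Ut U U'"
    have "op_I (lift_vf X u y) J (Eop f) z = op_I (lift_vf X u y) J (Eop g) z"
      by (rule op_I_cong_open[OF open_Ut[OF U(1) U'(1)] _ z]) (use fg closure_subset in \<open>auto simp: Eop_def Ut_def\<close>)
    also have "\<dots> = F (pfst z)" unfolding F_def
      by (rule op_I_lift_vf_Eop[OF g J]) (use z WOX closure_subset[of U] in \<open>auto simp: Ut_def\<close>)
    finally show "op_I (lift_vf X u y) J (Eop f) z = F (pfst z)" .
  next
    fix x assume x: "x \<in> U"
    show "op_I (\<lambda>i. X i y) J f x = F x"
      unfolding F_def by (rule op_I_cong_open[OF U(1) _ x]) (use fg closure_subset in blast)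
  qed
qed

lemma Eop_sob_term_le:
  assumes f: "smooth_cl U f" and y: "y \<in> closure T" and J: "set J \<subseteq> {..<d}"
    and Cu: "\<And>z. z \<in> closure (Ut U U') \<Longrightarrow> wgt y z \<le> Cu"
  shows "set_integrable lborel (Ut U U') (\<lambda>z. (op_I (lift_vf X u y) J (Eop f) z)\<^sup>2 * wgt y z)"
    "(LINT z:Ut U U'|lborel. (op_I (lift_vf X u y) J (Eop f) z)\<^sup>2 * wgt y z)
      \<le> measure lborel U' * Cu * (LINT x:U|lborel. (op_I (\<lambda>i. X i y) J f x)\<^sup>2 * 1)"
proof -
  obtain F where cF: "continuous_on (closure U) F"
    and eq1: "\<And>z. z \<in> Ut U U' \<Longrightarrow> op_I (lift_vf X u y) J (Eop f) z = F (pfst z)"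
    and eq2: "\<And>x. x \<in> U \<Longrightarrow> op_I (\<lambda>i. X i y) J f x = F x"
    by (rule op_I_lift_vf_Eop_smooth_cl[OF f y J]) blast
  have oUt: "open (Ut U U')" by (rule open_Ut[OF U(1) U'(1)])
  have cFp: "continuous_on (closure (Ut U U')) (\<lambda>z. (F (pfst z))\<^sup>2)"
    by (intro continuous_intros continuous_on_compose2[OF cF]) (auto simp: mem_closure_Ut)
  have iF: "set_integrable lborel (Ut U U') (\<lambda>z. Cu * (F (pfst z))\<^sup>2)"
    using set_integrable_continuous_closure[OF cFp bounded_Ut[OF U(2) U'(2)]] oUt by simp
  have iFw: "set_integrable lborel (Ut U U') (\<lambda>z. (F (pfst z))\<^sup>2 * wgt y z)"
    using set_integrable_continuous_closure[OF _ bounded_Ut[OF U(2) U'(2)]] oUt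
      continuous_on_mult[OF cFp continuous_on_vol_density[OF y]] by simp
  show "set_integrable lborel (Ut U U') (\<lambda>z. (op_I (lift_vf X u y) J (Eop f) z)\<^sup>2 * wgt y z)"
    by (subst set_integrable_cong[OF refl refl]) (use iFw eq1 in simp_all)
  have "(LINT z:Ut U U'|lborel. (op_I (lift_vf X u y) J (Eop f) z)\<^sup>2 * wgt y z)
      = (LINT z:Ut U U'|lborel. (F (pfst z))\<^sup>2 * wgt y z)"
    using oUt eq1 by (intro set_lebesgue_integral_cong) auto
  also have "\<dots> \<le> (LINT z:Ut U U'|lborel. Cu * (F (pfst z))\<^sup>2)"
  proof (rule set_integral_mono[OF iFw iF])
    fix z assume "z \<in> Ut U U'"
    hence "wgt y z \<le> Cu" using Cu closure_subset by blast
    thus "(F (pfst z))\<^sup>2 * wgt y z \<le> Cu * (F (pfst z))\<^sup>2" by (simp add: mult.commute mult_right_mono)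
  qed
  also have "\<dots> = Cu * (LINT x:U|lborel. LINT x':U'|lborel. (F x)\<^sup>2)"
    using set_integral_Ut_fubini[OF _ _ set_integrable_continuous_closure[OF cFp bounded_Ut[OF U(2) U'(2)]]]
      U(1) U'(1) oUt by simp
  also have "\<dots> = measure lborel U' * Cu * (LINT x:U|lborel. (op_I (\<lambda>i. X i y) J f x)\<^sup>2 * 1)"
    using U(1) U'(1) emeasure_bounded_finite[OF U'(2)] eq2
    by (simp add: set_integral_const set_lebesgue_integral_cong[of U] mult_ac)
  finally show "(LINT z:Ut U U'|lborel. (op_I (lift_vf X u y) J (Eop f) z)\<^sup>2 * wgt y z)
      \<le> measure lborel U' * Cu * (LINT x:U|lborel. (op_I (\<lambda>i. X i y) J f x)\<^sup>2 * 1)" .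
qed

lemma sob_bounded_family_Eop:
  "sob_bounded_family d (\<lambda>y i. X i y) (\<lambda>y z. 1) U (lift_vf X u) wgt (Ut U U') T Eop"
  unfolding sob_bounded_family_def
proof (intro conjI allI impI Eop_smooth_cl)
  fix k
  obtain c Cu where Cu: "\<And>y z. y \<in> closure T \<Longrightarrow> z \<in> closure (Ut U U') \<Longrightarrow> wgt y z \<le> Cu"
    using vol_density_bounds by metis
  define C where "C = sqrt (measure lborel U' * max Cu 0)"
  have "sob_in d (lift_vf X u y) (wgt y) (Ut U U') k (Eop f) \<and>
      sob_norm d (lift_vf X u y) (wgt y) (Ut U U') k (Eop f) \<le> C * sob_norm d (\<lambda>i. X i y) (\<lambda>z. 1) U k f"
    if y: "y \<in> T" and f: "smooth_cl U f" for y f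
  proof -
    have yc: "y \<in> closure T" using y closure_subset by blast
    have Cu': "wgt y z \<le> max Cu 0" if "z \<in> closure (Ut U U')" for z using Cu[OF yc that] by simp
    note E = Eop_sob_term_le[OF f yc _ Cu']
    have "sqrt (LINT z:Ut U U'|lborel. (op_I (lift_vf X u y) J (Eop f) z)\<^sup>2 * wgt y z)
        \<le> C * sqrt (LINT x:U|lborel. (op_I (\<lambda>i. X i y) J f x)\<^sup>2 * 1)" if "J \<in> mindices d k" for J
      using real_sqrt_le_mono[OF E(2)] that unfolding C_def by (simp add: real_sqrt_mult mindices_def)
    thus ?thesis
      using E(1) unfolding sob_in_def sob_norm_def sum_distrib_left
      by (auto simp: mindices_def intro: sum_mono)
  qed
  thus "\<exists>C\<ge>0. \<forall>y\<in>T. \<forall>f. smooth_cl U f \<and> sob_in d (\<lambda>i. X i y) (\<lambda>z. 1) U k f \<longrightarrow>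
      sob_in d (lift_vf X u y) (wgt y) (Ut U U') k (Eop f) \<and>
      sob_norm d (lift_vf X u y) (wgt y) (Ut U U') k (Eop f) \<le> C * sob_norm d (\<lambda>i. X i y) (\<lambda>z. 1) U k f"
    by (intro exI[of _ C]) (auto simp: C_def)
qed

end

theorem proposition3p10:
  fixes U :: "(real^'p) set" and U' :: "(real^'k) set" and T :: "(real^'q) set"
    and d m lam :: nat
    and X :: "nat \<Rightarrow> real^'q \<Rightarrow> real^'p \<Rightarrow> real^'p"
    and u :: "nat \<Rightarrow> real^'q \<Rightarrow> real^('p + 'k) \<Rightarrow> real^'k"
    and B :: "'p + 'k \<Rightarrow> brk"
    and \<zeta> :: "real^'k \<Rightarrow> real"
    and Pt :: "real^'q \<Rightarrow> (real^('p + 'k) \<Rightarrow> real) \<Rightarrow> (real^('p + 'k) \<Rightarrow> real)"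
  assumes U: "open U" "0 \<in> U" "bounded U"
    and U': "open U'" "0 \<in> U'" "bounded U'"
    and T: "open T" "0 \<in> T" "bounded T"
    and X_smooth: "\<forall>i<d. \<exists>W. closure U \<times> closure T \<subseteq> W \<and> smooth_on W (\<lambda>(x, y). X i y x)"
    and u_smooth: "\<forall>i<d. \<exists>W. closure (Ut U U') \<times> closure T \<subseteq> W \<and> smooth_on W (\<lambda>(z, y). u i y z)"
    and free: "\<forall>y\<in>closure T. \<forall>z\<in>closure (Ut U U').
       dim (span {brk_eval (lift_vf X u y) b z | b. brk_ok d m b}) = free_nilp_dim d m"
    and N: "CARD('p + 'k) = free_nilp_dim d m"
    and B_ok: "\<forall>a. brk_ok d m (B a)"
    and B_basis: "\<forall>y\<in>closure T. \<forall>z\<in>closure (Ut U U'). det (comm_mat (lift_vf X u y) B z) \<noteq> 0"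
    and \<zeta>: "smooth_on UNIV \<zeta>" "compact (closure {x. \<zeta> x \<noteq> 0})" "closure {x. \<zeta> x \<noteq> 0} \<subseteq> U'"
       "(LINT x:U'|lborel. \<zeta> x) = 1"
    and Pt: "smoothing_family d (\<lambda>y. lift_vf X u y) (\<lambda>y. vol_density (lift_vf X u y) B) (Ut U U') T lam Pt"
  shows "smoothing_family d (\<lambda>y i. X i y) (\<lambda>y z. 1) U T lam (\<lambda>y f. Rop U' \<zeta> (Pt y (Eop f)))"
proof -
  obtain OX where OX: "open OX" "closure U \<times> closure T \<subseteq> OX" "\<And>i. i \<in> {..<d} \<Longrightarrow> smooth_on OX (\<lambda>(x, y). X i y x)"
    by (rule smooth_on_common_nbhd[of "{..<d}" "closure U \<times> closure T" "\<lambda>i (x, y). X i y x"])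
      (use X_smooth in auto)
  obtain Ou where Ou: "open Ou" "closure (Ut U U') \<times> closure T \<subseteq> Ou"
    "\<And>i. i \<in> {..<d} \<Longrightarrow> smooth_on Ou (\<lambda>(z, y). u i y z)"
    by (rule smooth_on_common_nbhd[of "{..<d}" "closure (Ut U U') \<times> closure T" "\<lambda>i (z, y). u i y z"])
      (use u_smooth in auto)
  interpret lifted_setting U U' T d X u \<zeta> B OX Ou
    using U U' T OX Ou \<zeta> B_basis B_ok by unfold_locales (auto simp: brk_ok_def)
  show ?thesis
    by (rule smoothing_family_conj[OF Pt sob_bounded_family_Eop sob_bounded_family_Rop])
      (auto simp: vol_density_nonneg Eop_def intro: Rop_linear)
qed

end
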